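(* The set $\mathcal V_{\mathrm{BSSC}}$ of all binary subspace chirps in $\mathbb C^{2^m}$ has exactly $2^m\prod_{r=1}^m(2^r+1)$ elements, and the set $\mathcal V_{\mathrm{BC}}$ of binary chirps has exactly $2^{m(m+3)/2}$ elements. Consequently $|\mathcal V_{\mathrm{BSSC}}|/|\mathcal V_{\mathrm{BC}}|=\prod_{r=1}^m(1+2^{-r})$, which increases to $\prod_{r\ge1}(1+2^{-r})\approx2.384$ as $m\to\infty$.
   Context: Fix $m\ge1$, $N=2^m$. Binary vectors are columns over $\mathbb F_2$; $\mathrm{Sym}(r;2)$ is the set of symmetric binary $r\times r$ matrices, $\mathcal G(m,r;2)$ the set of $r$-dimensional subspaces of $\mathbb F_2^m$. Vectors of $\mathbb C^N$ are indexed by $\mathbb F_2^m$. Whenever a binary expression appears in an exponent of $i$, binary entries are lifted to the integers $0,1$ and the expression is evaluated in $\mathbb Z$ (equivalently mod 4). Echelon data: for $0\le r\le m$ and $H\in\mathcal G(m,r;2)$, let $\mathbf H_{\mathcal I}$ be the unique $m\times r$ binary matrix in column reduced echelon form with column space $H$: there are indices $i_1<\dots<i_r$, $\mathcal I=\{i_1,\dots,i_r\}$, such that rows $i_1,\dots,i_r$ of $\mathbf H_{\mathcal I}$ form $\mathbf I_r$ and column $j$ of $\mathbf H_{\mathcal I}$ is zero in all rows above row $i_j$. Let $\mathbf I_{\tilde{\mathcal I}}$ be the $m\times(m-r)$ matrix whose columns are the standard basis vectors $\mathbf e_i$ with $i\notin\mathcal I$, in increasing order of $i$, and put $\mathbf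 P_{\mathcal I}=[\mathbf H_{\mathcal I}\ \ \mathbf I_{\tilde{\mathcal I}}]\in\mathrm{GL}(m;2)$. (For $r=0$: $H=\{0\}$, $\mathbf P_{\mathcal I}=\mathbf I_m$.) For $\mathbf S_r\in\mathrm{Sym}(r;2)$, $\tilde{\mathbf S}_r\in\mathrm{Sym}(m;2)$ denotes the matrix with $\mathbf S_r$ as its upper-left $r\times r$ block and zeros elsewhere. Binary subspace chirps: let $f(\mathbf v,\mathbf w,r)=\prod_{i=r+1}^m(1+v_i+w_i)$ computed in $\mathbb F_2$ and viewed in $\{0,1\}$. For $\mathbf b\in\mathbb F_2^m$, the binary subspace chirp (BSSC) $\mathbf w_{\mathbf b}=\mathbf w^{H,\mathbf S_r}_{\mathbf b}\in\mathbb C^N$ has entries $\mathbf w_{\mathbf b}(\mathbf a)=2^{-r/2}\,i^{\mathbf u^T\tilde{\mathbf S}_r\mathbf u+2\mathbf b^T\mathbf u}\,f(\mathbf b,\mathbf u,r)$ with $\mathbf u=\mathbf P_{\mathcal I}^{-1}\mathbf a\in\mathbb F_2^m$, for $\mathbf a\in\mathbb F_2^m$. The integer $r$ is its rank. $\mathcal V_{\mathrm{BSSC}}$ is the set of all such vectors over all $0\le r\le m$, $H\in\mathcal G(m,r;2)$, $\mathbf S_r\in\mathrm{Sym}(r;2)$, $\mathbf b\in\mathbb F_2^m$; binary chirps are the BSSCs of rank $r=m$ (then $H=\mathbb F_2^m$, $\mathbf P_{\mathcal I}=\mathbf I_m$), and $\mathcal V_{\mathrm{BC}}$ is their set. *)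

theory Defs
  imports "HOL-Analysis.Analysis" "HOL-Library.Z2"
begin

text \<open>Binary vectors of F_2^m are functions nat => bit (type bit = F_2) that vanish
  at indices >= m (0-based indices 0..m-1 stand for the paper's 1..m).
  Binary matrices are functions nat => nat => bit (row, column).\<close>

definition binvecs :: "nat \<Rightarrow> (nat \<Rightarrow> bit) set" where
  "binvecs m = {v. \<forall>i\<ge>m. v i = 0}"

definition lift :: "bit \<Rightarrow> int" where
  "lift x = (if x = 1 then 1 else 0)"

definition span2 :: "(nat \<Rightarrow> bit) list \<Rightarrow> (nat \<Rightarrow> bit) set" where
  "span2 vs = {(\<lambda>i. \<Sum>j<length vs. c j * (vs ! j) i) | c. True}"

definition lin_indep2 :: "(nat \<Rightarrow> bit) list \<Rightarrow> bool" where
  "lin_indep2 vs = (\<forall>c. (\<lambda>i. \<Sum>j<length vs. c j * (vs ! j) i) = (\<lambda>i. 0) \<longrightarrow> (\<forall>j<length vs. c j = 0))"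

definition is_subspace2 :: "nat \<Rightarrow> (nat \<Rightarrow> bit) set \<Rightarrow> bool" where
  "is_subspace2 m H = (H \<subseteq> binvecs m \<and> (\<lambda>i. 0) \<in> H \<and> (\<forall>x\<in>H. \<forall>y\<in>H. (\<lambda>i. x i + y i) \<in> H))"

definition grassmann :: "nat \<Rightarrow> nat \<Rightarrow> (nat \<Rightarrow> bit) set set" where
  "grassmann m r = {H. is_subspace2 m H \<and>
     (\<exists>vs. length vs = r \<and> set vs \<subseteq> binvecs m \<and> lin_indep2 vs \<and> span2 vs = H)}"

definition colspace :: "nat \<Rightarrow> (nat \<Rightarrow> nat \<Rightarrow> bit) \<Rightarrow> (nat \<Rightarrow> bit) set" where
  "colspace r M = {(\<lambda>i. \<Sum>j<r. c j * M i j) | c. True}"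

text \<open>M is an m x r matrix in column reduced echelon form with pivot rows
  piv 0 < ... < piv (r-1) (0-based); entries outside the m x r range and
  pivot values outside {0..<r} are normalised to 0.\<close>
definition is_cref :: "nat \<Rightarrow> nat \<Rightarrow> (nat \<Rightarrow> nat \<Rightarrow> bit) \<Rightarrow> (nat \<Rightarrow> nat) \<Rightarrow> bool" where
  "is_cref m r M piv =
     ((\<forall>j k. j < k \<and> k < r \<longrightarrow> piv j < piv k) \<and> (\<forall>j<r. piv j < m) \<and> (\<forall>j\<ge>r. piv j = 0) \<and>
      (\<forall>j<r. \<forall>k<r. M (piv k) j = (if k = j then 1 else 0)) \<and>
      (\<forall>j<r. \<forall>i<piv j. M i j = 0) \<and>
      (\<forall>i j. (m \<le> i \<or> r \<le> j) \<longrightarrow> M i j = 0))"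

definition echelon :: "nat \<Rightarrow> nat \<Rightarrow> (nat \<Rightarrow> bit) set \<Rightarrow> (nat \<Rightarrow> nat \<Rightarrow> bit) \<times> (nat \<Rightarrow> nat)" where
  "echelon m r H = (THE (M, piv). is_cref m r M piv \<and> colspace r M = H)"

text \<open>P_I = [H_I  I_{~I}], an m x m matrix.\<close>
definition Pmat :: "nat \<Rightarrow> nat \<Rightarrow> (nat \<Rightarrow> nat \<Rightarrow> bit) \<Rightarrow> (nat \<Rightarrow> nat) \<Rightarrow> (nat \<Rightarrow> nat \<Rightarrow> bit)" where
  "Pmat m r M piv = (\<lambda>i k. if k < r then M i k
      else if k < m then (if i = sorted_list_of_set ({0..<m} - piv ` {0..<r}) ! (k - r) then 1 else 0)
      else 0)"

definition mat_vec :: "nat \<Rightarrow> (nat \<Rightarrow> nat \<Rightarrow> bit) \<Rightarrow> (nat \<Rightarrow> bit) \<Rightarrow> (nat \<Rightarrow> bit)" where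
  "mat_vec m P u = (\<lambda>i. \<Sum>k<m. P i k * u k)"

text \<open>Sym(r;2): symmetric binary r x r matrices (zero outside the r x r block).
  Such an S is, as a function, also the padded matrix S~_r.\<close>
definition symmats :: "nat \<Rightarrow> (nat \<Rightarrow> nat \<Rightarrow> bit) set" where
  "symmats r = {S. (\<forall>i j. S i j = S j i) \<and> (\<forall>i j. (r \<le> i \<or> r \<le> j) \<longrightarrow> S i j = 0)}"

text \<open>The binary subspace chirp w_b^{H,S_r}, a vector of C^N indexed by F_2^m
  (extended by 0 outside F_2^m).\<close>
definition bssc :: "nat \<Rightarrow> nat \<Rightarrow> (nat \<Rightarrow> bit) set \<Rightarrow> (nat \<Rightarrow> nat \<Rightarrow> bit) \<Rightarrow> (nat \<Rightarrow> bit)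
    \<Rightarrow> ((nat \<Rightarrow> bit) \<Rightarrow> complex)" where
  "bssc m r H S b = (\<lambda>a. if a \<in> binvecs m then
     (let (M, piv) = echelon m r H;
          u = (THE u. u \<in> binvecs m \<and> mat_vec m (Pmat m r M piv) u = a);
          e = (\<Sum>i<m. \<Sum>j<m. lift (u i) * lift (S i j) * lift (u j)) + 2 * (\<Sum>i<m. lift (b i) * lift (u i));
          f = lift (\<Prod>i\<in>{r..<m}. 1 + b i + u i)
      in complex_of_real (2 powr (- real r / 2)) * (\<i> powi e) * of_int f)
     else 0)"

definition V_BSSC :: "nat \<Rightarrow> ((nat \<Rightarrow> bit) \<Rightarrow> complex) set" where
  "V_BSSC m = {bssc m r H S b | r H S b. r \<le> m \<and> H \<in> grassmann m r \<and> S \<in> symmats r \<and> b \<in> binvecs m}"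

definition V_BC :: "nat \<Rightarrow> ((nat \<Rightarrow> bit) \<Rightarrow> complex) set" where
  "V_BC m = {bssc m m H S b | H S b. H \<in> grassmann m m \<and> S \<in> symmats m \<and> b \<in> binvecs m}"

end

theory Submission
  imports Defs
begin

text \<open>
  Every \<open>r\<close>-dimensional subspace \<open>H\<close> of \<open>\<bbbF>\<^sub>2\<^sup>m\<close> has a unique column reduced echelon basis.
  Echelon forms with \<open>m + 1\<close> rows either have their last pivot in the last row or leave that
  row free, so their number satisfies the \<open>q\<close>-Pascal recursion of the Gaussian binomial
  \<open>[m, r]\<^sub>2\<close>. A binary subspace chirp determines its parameters: on its support it has modulus
  \<open>2\<^sup>-\<^sup>r\<^sup>/\<^sup>2\<close>, the support is an affine translate of \<open>H\<close>, and on the support the phase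
  \<open>i\<^bsup>x\<^sup>TSx + 2b\<^sup>Tx\<^esup>\<close> recovers \<open>S\<close> and \<open>b\<close> from unit vectors and their pairwise sums. Hence
  \<open>|V\<^sub>B\<^sub>S\<^sub>S\<^sub>C| = 2\<^sup>m \<Sum>\<^sub>r [m, r]\<^sub>2 2\<^bsup>r(r+1)/2\<^esup>\<close>, which the Gaussian binomial theorem
  evaluates to \<open>2\<^sup>m \<Prod>\<^sub>r (1 + 2\<^sup>r)\<close>. The ratio is a partial product of \<open>\<Prod> (1 + 2\<^sup>-\<^sup>r)\<close>; its limit
  lies between the 15th partial product and that product times \<open>1 + 2\<^sup>-\<^sup>1\<^sup>4\<close>, by a
  geometric tail estimate.
\<close>

(* Keep + and * on bit as field operations instead of rewriting them to XOR and AND. *)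
declare add_bit_eq_xor[simp del] mult_bit_eq_and[simp del]

section \<open>Binary vectors and linear combinations\<close>

type_synonym bvec = "nat \<Rightarrow> bit"
type_synonym bmat = "nat \<Rightarrow> nat \<Rightarrow> bit"

lemma UNIV_bit: "(UNIV::bit set) = {0, 1}"
  by (auto intro: bit.exhaust)

lemma card_UNIV_bit: "card (UNIV::bit set) = 2"
  by (simp add: UNIV_bit)

lemma bit_add_eq_0_iff: "(x::bit) + y = 0 \<longleftrightarrow> x = y"
  by (cases x; cases y) simp_all

lemma lift_simps [simp]: "lift 0 = 0" "lift 1 = 1"
  by (simp_all add: lift_def)

lemma bij_betw_binvecs_PiE:
  "bij_betw (\<lambda>v. restrict v {..<m}) (binvecs m) (PiE {..<m} (\<lambda>_. UNIV::bit set))"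
proof (rule bij_betwI')
  fix x y assume "x \<in> binvecs m" "y \<in> binvecs m"
  then show "(restrict x {..<m} = restrict y {..<m}) = (x = y)"
    unfolding binvecs_def by (auto simp: fun_eq_iff restrict_def) (metis not_le)
next
  fix y assume y: "y \<in> PiE {..<m} (\<lambda>_. UNIV::bit set)"
  define x where "x = (\<lambda>i. if i < m then y i else 0)"
  have "x \<in> binvecs m" unfolding x_def binvecs_def by auto
  moreover have "y = restrict x {..<m}" using y unfolding x_def
    by (auto simp: fun_eq_iff restrict_def PiE_def extensional_def)
  ultimately show "\<exists>x\<in>binvecs m. y = restrict x {..<m}" by blast
qed auto

lemma card_binvecs: "card (binvecs m) = 2 ^ m"
  using bij_betw_same_card[OF bij_betw_binvecs_PiE] by (simp add: card_PiE card_UNIV_bit)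

lemma finite_binvecs: "finite (binvecs m)"
  using bij_betw_finite[OF bij_betw_binvecs_PiE] by (simp add: finite_PiE UNIV_bit)

definition unit_vec :: "nat \<Rightarrow> bvec" where
  "unit_vec k = (\<lambda>i. if i = k then 1 else 0)"

definition lincomb :: "nat \<Rightarrow> bvec \<Rightarrow> (nat \<Rightarrow> bvec) \<Rightarrow> bvec" where
  "lincomb r c V = (\<lambda>i. \<Sum>j<r. c j * V j i)"

definition col :: "bmat \<Rightarrow> nat \<Rightarrow> bvec" where
  "col M = (\<lambda>j i. M i j)"

lemma colspace_eq_lincomb: "colspace r M = {lincomb r c (col M) | c. True}"
  by (simp add: colspace_def lincomb_def col_def)

lemma span2_eq_lincomb: "span2 vs = {lincomb (length vs) c (\<lambda>j. vs ! j) | c. True}"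
  by (simp add: span2_def lincomb_def)

lemma lincomb_add: "(\<lambda>i. lincomb r c V i + lincomb r d V i) = lincomb r (\<lambda>j. c j + d j) V"
  by (simp add: lincomb_def sum.distrib[symmetric] distrib_right)

lemma lincomb_cong: "(\<And>j. j < r \<Longrightarrow> c j = d j) \<Longrightarrow> lincomb r c V = lincomb r d V"
  by (simp add: lincomb_def)

lemma lincomb_cong_vectors: "(\<And>j. j < r \<Longrightarrow> V j = W j) \<Longrightarrow> lincomb r c V = lincomb r c W"
  by (simp add: lincomb_def)

lemma lincomb_Suc: "lincomb (Suc r) c V = (\<lambda>i. lincomb r c V i + c r * V r i)"
  by (simp add: lincomb_def)

lemma lincomb_zero: "lincomb r (\<lambda>j. 0) V = (\<lambda>i. 0)"
  by (simp add: lincomb_def)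

lemma lincomb_unit_vec:
  assumes "k < r"
  shows "lincomb r (unit_vec k) V = V k"
proof -
  have "unit_vec k j * V j i = (if j = k then V k i else 0)" for j i by (simp add: unit_vec_def)
  then show ?thesis using assms by (simp add: lincomb_def)
qed

lemma lincomb_fun_upd_zero: "lincomb r c (\<lambda>j. (V j)(k := 0)) = (lincomb r c V)(k := 0)"
  by (simp add: lincomb_def fun_eq_iff)

lemma lincomb_image_binvecs: "{lincomb r c V | c. True} = (\<lambda>c. lincomb r c V) ` binvecs r"
proof -
  have "lincomb r c V = lincomb r (\<lambda>j. if j < r then c j else 0) V"
    and "(\<lambda>j. if j < r then c j else 0) \<in> binvecs r" for c
    by (auto intro: lincomb_cong simp: binvecs_def)
  then show ?thesis by blast
qed

lemma inj_on_lincomb: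
  assumes indep: "\<And>c. lincomb r c V = (\<lambda>i. 0) \<Longrightarrow> \<forall>j<r. c j = 0"
  shows "inj_on (\<lambda>c. lincomb r c V) (binvecs r)"
proof (rule inj_onI)
  fix c d assume c: "c \<in> binvecs r" and d: "d \<in> binvecs r" and eq: "lincomb r c V = lincomb r d V"
  have "lincomb r (\<lambda>j. c j + d j) V = (\<lambda>i. 0)"
    using lincomb_add[of r c V d] eq by simp
  then have "\<forall>j<r. c j + d j = 0" using indep by blast
  then show "c = d" using c d unfolding binvecs_def
    by (auto simp: fun_eq_iff bit_add_eq_0_iff) (metis not_le)
qed

lemma card_span_indep:
  assumes "\<And>c. lincomb r c V = (\<lambda>i. 0) \<Longrightarrow> \<forall>j<r. c j = 0"
  shows "card {lincomb r c V | c. True} = 2 ^ r"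
proof -
  have "inj_on (\<lambda>c. lincomb r c V) (binvecs r)" by (rule inj_on_lincomb) (rule assms)
  then show ?thesis unfolding lincomb_image_binvecs by (simp add: card_image card_binvecs)
qed

lemma lincomb_in_subspace:
  assumes "is_subspace2 m H" "\<And>j. j < r \<Longrightarrow> V j \<in> H"
  shows "lincomb r c V \<in> H"
  using assms(2)
proof (induction r)
  case 0 then show ?case using assms(1) by (simp add: lincomb_def is_subspace2_def)
next
  case (Suc r)
  then have "lincomb r c V \<in> H" "V r \<in> H" by auto
  then show ?case using assms(1)
    by (cases "c r") (simp_all add: lincomb_Suc is_subspace2_def)
qed

lemma subspace_finite: "is_subspace2 m H \<Longrightarrow> finite H"
  unfolding is_subspace2_def using finite_binvecs finite_subset by blast

section \<open>Column reduced echelon forms\<close>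

lemma is_crefD:
  assumes "is_cref m r M p"
  shows "\<And>j k. j < k \<Longrightarrow> k < r \<Longrightarrow> p j < p k"
    "\<And>j. j < r \<Longrightarrow> p j < m"
    "\<And>j. r \<le> j \<Longrightarrow> p j = 0"
    "\<And>j k. j < r \<Longrightarrow> k < r \<Longrightarrow> M (p k) j = (if k = j then 1 else 0)"
    "\<And>j i. j < r \<Longrightarrow> i < p j \<Longrightarrow> M i j = 0"
    "\<And>i j. m \<le> i \<or> r \<le> j \<Longrightarrow> M i j = 0"
  using assms unfolding is_cref_def by blast+

lemma is_crefI:
  assumes "\<And>j k. j < k \<Longrightarrow> k < r \<Longrightarrow> p j < p k"
    "\<And>j. j < r \<Longrightarrow> p j < m"
    "\<And>j. r \<le> j \<Longrightarrow> p j = 0"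
    "\<And>j k. j < r \<Longrightarrow> k < r \<Longrightarrow> M (p k) j = (if k = j then 1 else 0)"
    "\<And>j i. j < r \<Longrightarrow> i < p j \<Longrightarrow> M i j = 0"
    "\<And>i j. m \<le> i \<or> r \<le> j \<Longrightarrow> M i j = 0"
  shows "is_cref m r M p"
  using assms unfolding is_cref_def by blast

lemma is_cref_strict_mono_on: "is_cref m r M p \<Longrightarrow> strict_mono_on {..<r} p"
  by (auto simp: strict_mono_on_def dest: is_crefD(1))

lemma is_cref_lincomb_pivot:
  assumes "is_cref m r M p" "k < r"
  shows "lincomb r c (col M) (p k) = c k"
proof -
  have "lincomb r c (col M) (p k) = (\<Sum>j<r. if j = k then c j else 0)"
    unfolding lincomb_def col_def using is_crefD(4)[OF assms(1) _ assms(2)]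
    by (intro sum.cong) auto
  then show ?thesis using assms(2) by simp
qed

lemma is_cref_rank_le: "is_cref m r M p \<Longrightarrow> r \<le> m"
  using card_inj_on_le[of p "{..<r}" "{..<m}"]
  by (auto dest: is_crefD(2) is_cref_strict_mono_on strict_mono_on_imp_inj_on)

lemma lincomb_in_colspace: "lincomb r c (col M) \<in> colspace r M"
  unfolding colspace_eq_lincomb by blast

lemma colspaceE:
  assumes "x \<in> colspace r M"
  obtains c where "x = lincomb r c (col M)"
  using assms unfolding colspace_eq_lincomb by blast

lemma subspace_colspace:
  assumes "is_cref m r M p"
  shows "is_subspace2 m (colspace r M)"
  unfolding is_subspace2_def
proof (intro conjI ballI)
  show "colspace r M \<subseteq> binvecs m"
    using is_crefD(6)[OF assms] by (auto simp: colspace_eq_lincomb lincomb_def binvecs_def col_def)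
  show "(\<lambda>i. 0) \<in> colspace r M"
    using lincomb_in_colspace[of r "\<lambda>j. 0" M] by (simp only: lincomb_zero)
  fix x y assume "x \<in> colspace r M" "y \<in> colspace r M"
  then show "(\<lambda>i. x i + y i) \<in> colspace r M"
    by (elim colspaceE) (simp add: lincomb_add lincomb_in_colspace)
qed

lemma grassmannD: "H \<in> grassmann m r \<Longrightarrow> is_subspace2 m H \<and> card H = 2 ^ r"
proof -
  assume "H \<in> grassmann m r"
  then obtain vs where sub: "is_subspace2 m H"
    and vs: "length vs = r" "lin_indep2 vs" "span2 vs = H"
    unfolding grassmann_def by blast
  have "card {lincomb (length vs) c (\<lambda>j. vs ! j) | c. True} = 2 ^ length vs"
    by (rule card_span_indep) (use vs(2) in \<open>simp add: lin_indep2_def lincomb_def\<close>)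
  then show ?thesis using sub vs by (simp add: span2_eq_lincomb)
qed

lemma colspace_in_grassmann: "is_cref m r M p \<Longrightarrow> colspace r M \<in> grassmann m r"
proof -
  assume cr: "is_cref m r M p"
  define vs where "vs = map (col M) [0..<r]"
  have len: "length vs = r" unfolding vs_def by simp
  have lincomb_vs: "lincomb (length vs) c (\<lambda>j. vs ! j) = lincomb r c (col M)" for c
    unfolding len by (rule lincomb_cong_vectors) (simp add: vs_def)
  have "set vs \<subseteq> binvecs m"
    using is_crefD(6)[OF cr] by (auto simp: vs_def col_def binvecs_def)
  moreover have "lin_indep2 vs"
    unfolding lin_indep2_def using lincomb_vs is_cref_lincomb_pivot[OF cr] len
    unfolding lincomb_def by metis
  moreover have "span2 vs = colspace r M"
    unfolding span2_eq_lincomb colspace_eq_lincomb lincomb_vs ..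
  ultimately show ?thesis using subspace_colspace[OF cr] len unfolding grassmann_def by blast
qed

definition adjoin_pivot :: "nat \<Rightarrow> nat \<Rightarrow> bmat \<Rightarrow> bmat" where
  "adjoin_pivot m r M = (\<lambda>i j. if j = r \<and> i = m then 1 else M i j)"

definition adjoin_row :: "nat \<Rightarrow> bvec \<Rightarrow> bmat \<Rightarrow> bmat" where
  "adjoin_row m w M = (\<lambda>i j. if i = m then w j else M i j)"

lemma is_cref_adjoin_pivot:
  assumes cr: "is_cref m r M p"
  shows "is_cref (Suc m) (Suc r) (adjoin_pivot m r M) (p(r := m))"
proof (rule is_crefI)
  note D = is_crefD[OF cr]
  fix j k assume "j < k" "k < Suc r"
  then show "(p(r := m)) j < (p(r := m)) k"
    using D(1)[of j k] D(2)[of j] by (cases "k = r") auto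
next
  note D = is_crefD[OF cr]
  fix j k assume j: "j < Suc r" and k: "k < Suc r"
  show "adjoin_pivot m r M ((p(r := m)) k) j = (if k = j then 1 else 0)"
  proof (cases "k = r")
    case True then show ?thesis using D(6)[of m j] j by (auto simp: adjoin_pivot_def)
  next
    case False
    then have "k < r" "p k \<noteq> m" using k D(2)[of k] by auto
    then show ?thesis using False j D(4)[of j k] D(6)[of "p k" r]
      by (cases "j = r") (auto simp: adjoin_pivot_def)
  qed
next
  note D = is_crefD[OF cr]
  fix j i assume "j < Suc r" "i < (p(r := m)) j"
  then show "adjoin_pivot m r M i j = 0"
    using D(5)[of j i] D(6)[of i r] by (cases "j = r") (auto simp: adjoin_pivot_def)
qed (use is_crefD[OF cr] in \<open>auto simp: adjoin_pivot_def less_Suc_eq\<close>)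

lemma is_cref_adjoin_row:
  assumes cr: "is_cref m r M p" and w: "w \<in> binvecs r"
  shows "is_cref (Suc m) r (adjoin_row m w M) p"
proof (rule is_crefI)
  note D = is_crefD[OF cr]
  fix j i assume "j < r" "i < p j"
  then show "adjoin_row m w M i j = 0" using D(2)[of j] D(5)[of j i] by (simp add: adjoin_row_def)
next
  note D = is_crefD[OF cr]
  fix j k assume "j < r" "k < r"
  then show "adjoin_row m w M (p k) j = (if k = j then 1 else 0)"
    using D(2)[of k] D(4)[of j k] by (simp add: adjoin_row_def)
qed (use is_crefD[OF cr] w in \<open>auto simp: adjoin_row_def binvecs_def less_Suc_eq\<close>)

lemma colspace_adjoin_pivot:
  assumes cr: "is_cref m r M p"
  shows "colspace (Suc r) (adjoin_pivot m r M)
    = colspace r M \<union> (\<lambda>v i. v i + unit_vec m i) ` colspace r M"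
proof -
  have "col (adjoin_pivot m r M) r = unit_vec m"
    using is_crefD(6)[OF cr] by (auto simp: col_def adjoin_pivot_def unit_vec_def)
  moreover have "lincomb r c (col (adjoin_pivot m r M)) = lincomb r c (col M)" for c
    by (rule lincomb_cong_vectors) (auto simp: col_def adjoin_pivot_def)
  ultimately have lincomb_adjoin: "lincomb (Suc r) c (col (adjoin_pivot m r M))
      = (\<lambda>i. lincomb r c (col M) i + c r * unit_vec m i)" for c
    by (simp add: lincomb_Suc)
  have lincomb_upd: "lincomb r (c(r := x)) V = lincomb r c V" for c x V
    by (rule lincomb_cong) simp
  show ?thesis
  proof (intro equalityI subsetI)
    fix v assume "v \<in> colspace (Suc r) (adjoin_pivot m r M)"
    then obtain c where "v = lincomb (Suc r) c (col (adjoin_pivot m r M))" by (rule colspaceE)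
    then show "v \<in> colspace r M \<union> (\<lambda>v i. v i + unit_vec m i) ` colspace r M"
      using lincomb_in_colspace[of r c M] by (cases "c r") (auto simp: lincomb_adjoin)
  next
    fix v assume "v \<in> colspace r M \<union> (\<lambda>v i. v i + unit_vec m i) ` colspace r M"
    then obtain c x where "v = (\<lambda>i. lincomb r c (col M) i + x * unit_vec m i)"
      by (auto elim!: colspaceE) (metis mult_zero_left add_0_right, metis mult_1)
    then have "v = lincomb (Suc r) (c(r := x)) (col (adjoin_pivot m r M))"
      by (simp add: lincomb_adjoin lincomb_upd)
    then show "v \<in> colspace (Suc r) (adjoin_pivot m r M)" by (simp add: lincomb_in_colspace)
  qed
qed

lemma subspace_last_coord_zero:
  assumes "is_subspace2 (Suc m) H"
  shows "is_subspace2 m {v \<in> H. v m = 0}"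
  using assms unfolding is_subspace2_def binvecs_def
  by (auto simp: subset_iff) (metis le_antisym not_less_eq_eq)

lemma subspace_image_fun_upd_zero:
  assumes "is_subspace2 (Suc m) H"
  shows "is_subspace2 m ((\<lambda>v. v(m := 0)) ` H)"
  unfolding is_subspace2_def
proof (intro conjI ballI)
  show "(\<lambda>v. v(m := 0)) ` H \<subseteq> binvecs m"
    using assms by (auto simp: is_subspace2_def binvecs_def subset_iff)
  have "(\<lambda>i. 0) = (\<lambda>i::nat. 0::bit)(m := 0)" by auto
  then show "(\<lambda>i. 0) \<in> (\<lambda>v. v(m := 0)) ` H"
    using assms unfolding is_subspace2_def by blast
  fix x y assume "x \<in> (\<lambda>v. v(m := 0)) ` H" "y \<in> (\<lambda>v. v(m := 0)) ` H"
  then obtain v w where "v \<in> H" "w \<in> H" "x = v(m := 0)" "y = w(m := 0)" by blast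
  moreover have "(\<lambda>i. (v(m := 0)) i + (w(m := 0)) i) = (\<lambda>i. v i + w i)(m := 0)" by auto
  ultimately show "(\<lambda>i. x i + y i) \<in> (\<lambda>v. v(m := 0)) ` H"
    using assms unfolding is_subspace2_def by auto
qed

lemma inj_on_fun_upd_zero:
  assumes "is_subspace2 n H" "unit_vec m \<notin> H"
  shows "inj_on (\<lambda>v. v(m := 0)) H"
proof (rule inj_onI, rule ccontr)
  fix v w assume vw: "v \<in> H" "w \<in> H" and eq: "v(m := 0) = w(m := 0)" and "v \<noteq> w"
  have off: "v i = w i" if "i \<noteq> m" for i using fun_cong[OF eq, of i] that by simp
  then have "v m \<noteq> w m" using \<open>v \<noteq> w\<close> by (metis ext)
  then have "v m + w m = 1" by (metis bit_add_eq_0_iff bit_not_zero_iff)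
  then have "(\<lambda>i. v i + w i) = unit_vec m" using off by (auto simp: unit_vec_def)
  then show False using assms vw unfolding is_subspace2_def by metis
qed

text \<open>Existence, by induction on \<open>m\<close>: if \<open>e\<^sub>m \<in> H\<close>, it becomes the last pivot column on top of
  the slice \<open>{v \<in> H. v\<^sub>m = 0}\<close>; otherwise deleting coordinate \<open>m\<close> is injective on \<open>H\<close>, and the
  last row of the echelon form is read off from the preimages of its columns.\<close>
lemma cref_exists_Suc_pivot:
  assumes sub: "is_subspace2 (Suc m) H" and e: "unit_vec m \<in> H" and card: "card H = 2 ^ r"
    and IH: "\<And>H r. is_subspace2 m H \<Longrightarrow> card H = 2 ^ r \<Longrightarrow> \<exists>M p. is_cref m r M p \<and> colspace r M = H"
  shows "\<exists>M p. is_cref (Suc m) r M p \<and> colspace r M = H"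
proof -
  define H0 where "H0 = {v \<in> H. v m = 0}"
  define t where "t = (\<lambda>v i. v i + unit_vec m i)"
  have tH: "t v \<in> H" if "v \<in> H" for v
    using sub e that unfolding is_subspace2_def t_def by blast
  have tt: "t (t v) = v" for v unfolding t_def by (simp add: add.assoc)
  have tm: "t v m = v m + 1" for v unfolding t_def unit_vec_def by simp
  have split: "H = H0 \<union> t ` H0"
  proof (intro equalityI subsetI)
    fix v assume "v \<in> H"
    then show "v \<in> H0 \<union> t ` H0"
      using tH[of v] tm[of v] tt[of v] unfolding H0_def
      by (cases "v m") (auto intro: image_eqI[where x = "t v"])
  qed (use tH in \<open>auto simp: H0_def\<close>)
  have "finite H0" using subspace_finite[OF sub] unfolding H0_def by simp
  moreover have "H0 \<inter> t ` H0 = {}" using tm unfolding H0_def by auto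
  moreover have "inj_on t H0" by (metis inj_onI tt)
  ultimately have "card H = 2 * card H0"
    by (simp add: split card_Un_disjoint card_image)
  then obtain r' where r: "r = Suc r'" and card0: "card H0 = 2 ^ r'"
    using card by (cases r) auto
  obtain M p where cr: "is_cref m r' M p" and cs: "colspace r' M = H0"
    using IH[OF subspace_last_coord_zero[OF sub, folded H0_def] card0] by blast
  have "colspace r (adjoin_pivot m r' M) = H"
    unfolding r colspace_adjoin_pivot[OF cr] cs split t_def ..
  then show ?thesis using is_cref_adjoin_pivot[OF cr] r by blast
qed

lemma cref_exists_Suc_proj:
  assumes sub: "is_subspace2 (Suc m) H" and e: "unit_vec m \<notin> H" and card: "card H = 2 ^ r"
    and IH: "\<And>H r. is_subspace2 m H \<Longrightarrow> card H = 2 ^ r \<Longrightarrow> \<exists>M p. is_cref m r M p \<and> colspace r M = H"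
  shows "\<exists>M p. is_cref (Suc m) r M p \<and> colspace r M = H"
proof -
  let ?proj = "\<lambda>v::nat \<Rightarrow> bit. v(m := 0)"
  have inj: "inj_on ?proj H" by (rule inj_on_fun_upd_zero[OF sub e])
  obtain M p where cr: "is_cref m r M p" and cs: "colspace r M = ?proj ` H"
    using IH[OF subspace_image_fun_upd_zero[OF sub]] card card_image[OF inj] by metis
  have "\<exists>v\<in>H. ?proj v = col M j" if "j < r" for j
    using lincomb_in_colspace[of r "unit_vec j" M] lincomb_unit_vec[OF that] cs by auto
  then obtain L where L: "\<And>j. j < r \<Longrightarrow> L j \<in> H \<and> ?proj (L j) = col M j" by metis
  define w where "w = (\<lambda>j. if j < r then L j m else 0)"
  have cols: "col (adjoin_row m w M) j = L j" if "j < r" for j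
  proof
    fix i
    have "?proj (L j) = col M j" using L[OF that] by blast
    from fun_cong[OF this, of i] show "col (adjoin_row m w M) j i = L j i"
      using that by (cases "i = m") (auto simp: col_def adjoin_row_def w_def)
  qed
  have "colspace r (adjoin_row m w M) = H"
  proof (intro equalityI subsetI)
    fix v assume "v \<in> colspace r (adjoin_row m w M)"
    then show "v \<in> H"
      using lincomb_in_subspace[OF sub, of r L] L
      by (auto elim!: colspaceE simp: lincomb_cong_vectors[OF cols])
  next
    fix v assume v: "v \<in> H"
    then obtain c where "?proj v = lincomb r c (col M)" using cs by (auto elim: colspaceE)
    also have "\<dots> = lincomb r c (\<lambda>j. ?proj (L j))" by (rule lincomb_cong_vectors) (simp add: L)
    also have "\<dots> = ?proj (lincomb r c L)" by (rule lincomb_fun_upd_zero)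
    finally have "v = lincomb r c L"
      using inj v lincomb_in_subspace[OF sub, of r L c] L by (auto dest: inj_onD)
    then show "v \<in> colspace r (adjoin_row m w M)"
      using lincomb_in_colspace[of r c "adjoin_row m w M"] by (simp add: lincomb_cong_vectors[OF cols])
  qed
  moreover have "w \<in> binvecs r" by (simp add: w_def binvecs_def)
  ultimately show ?thesis using is_cref_adjoin_row[OF cr] by blast
qed

lemma cref_exists:
  "is_subspace2 m H \<Longrightarrow> card H = 2 ^ r \<Longrightarrow> \<exists>M p. is_cref m r M p \<and> colspace r M = H"
proof (induction m arbitrary: H r)
  case 0
  then have "H = {\<lambda>i. 0}" by (auto simp: is_subspace2_def binvecs_def)
  moreover from this have "r = 0" using "0.prems"(2) by (cases r) auto
  moreover have "is_cref 0 0 (\<lambda>i j. 0) (\<lambda>j. 0)" by (simp add: is_cref_def)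
  ultimately show ?case by (intro exI[of _ "\<lambda>i j. 0"] exI[of _ "\<lambda>j. 0"]) (simp add: colspace_def)
next
  case (Suc m)
  show ?case
  proof (cases "unit_vec m \<in> H")
    case True
    then show ?thesis by (rule cref_exists_Suc_pivot[OF Suc.prems(1) _ Suc.prems(2) Suc.IH])
  next
    case False
    then show ?thesis by (rule cref_exists_Suc_proj[OF Suc.prems(1) _ Suc.prems(2) Suc.IH])
  qed
qed

definition lead_index :: "bvec \<Rightarrow> nat" where
  "lead_index v = (LEAST i. v i = 1)"

lemma lead_index_lincomb:
  assumes cr: "is_cref m r M p" and j0: "j0 < r" "c j0 = 1" "\<forall>j<j0. c j = 0"
  shows "lead_index (lincomb r c (col M)) = p j0"
  unfolding lead_index_def
proof (rule Least_equality)
  show "lincomb r c (col M) (p j0) = 1" using is_cref_lincomb_pivot[OF cr j0(1)] j0(2) by simp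
  have "lincomb r c (col M) i = 0" if "i < p j0" for i
    unfolding lincomb_def col_def
  proof (rule sum.neutral, intro ballI)
    fix j assume j: "j \<in> {..<r}"
    show "c j * M i j = 0"
    proof (cases "j < j0")
      case False
      then have "p j0 \<le> p j" using is_crefD(1)[OF cr, of j0 j] j by (cases "j = j0") auto
      then show ?thesis using is_crefD(5)[OF cr, of j i] \<open>i < p j0\<close> j by simp
    qed (use j0(3) in simp)
  qed
  then show "p j0 \<le> y" if "lincomb r c (col M) y = 1" for y
    using that by (metis not_le zero_neq_one)
qed

lemma lead_index_colspace:
  assumes cr: "is_cref m r M p"
  shows "lead_index ` (colspace r M - {\<lambda>i. 0}) = p ` {..<r}"
proof (intro equalityI subsetI)
  fix x assume "x \<in> p ` {..<r}"
  then obtain j where j: "j < r" "x = p j" by auto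
  have "lincomb r (unit_vec j) (col M) \<noteq> (\<lambda>i. 0)"
    using is_cref_lincomb_pivot[OF cr j(1), of "unit_vec j"] by (auto simp: unit_vec_def)
  moreover have "lead_index (lincomb r (unit_vec j) (col M)) = x"
    using lead_index_lincomb[OF cr j(1)] j by (simp add: unit_vec_def)
  ultimately show "x \<in> lead_index ` (colspace r M - {\<lambda>i. 0})"
    using lincomb_in_colspace by blast
next
  fix x assume "x \<in> lead_index ` (colspace r M - {\<lambda>i. 0})"
  then obtain c where x: "x = lead_index (lincomb r c (col M))" and nz: "lincomb r c (col M) \<noteq> (\<lambda>i. 0)"
    by (auto elim: colspaceE)
  have ex: "\<exists>j. j < r \<and> c j = 1"
  proof (rule ccontr)
    assume "\<not> (\<exists>j. j < r \<and> c j = 1)"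
    then have "lincomb r c (col M) = lincomb r (\<lambda>j. 0) (col M)" by (intro lincomb_cong) simp
    then show False using nz lincomb_zero by simp
  qed
  define j0 where "j0 = (LEAST j. j < r \<and> c j = 1)"
  have j0: "j0 < r \<and> c j0 = 1" unfolding j0_def using LeastI_ex[OF ex] .
  have "\<forall>j<j0. c j = 0"
  proof (intro allI impI)
    fix j assume "j < j0"
    then have "\<not> (j < r \<and> c j = 1)" unfolding j0_def by (rule not_less_Least)
    then show "c j = 0" using \<open>j < j0\<close> j0 by simp
  qed
  then have "x = p j0" using lead_index_lincomb[OF cr] j0 x by simp
  then show "x \<in> p ` {..<r}" using j0 by simp
qed

lemma strict_mono_on_rank:
  fixes f :: "nat \<Rightarrow> 'a::linorder"
  assumes f: "strict_mono_on {..<r} f" and j: "j < r"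
  shows "card {x \<in> f ` {..<r}. x < f j} = j"
proof -
  have "{x \<in> f ` {..<r}. x < f j} = f ` {..<j}"
    using strict_mono_on_less[OF f] j by auto
  moreover have "inj_on f {..<j}"
    using inj_on_subset[OF strict_mono_on_imp_inj_on[OF f]] j by auto
  ultimately show ?thesis by (simp add: card_image)
qed

lemma strict_mono_on_image_eq:
  fixes f g :: "nat \<Rightarrow> 'a::linorder"
  assumes f: "strict_mono_on {..<r} f" and g: "strict_mono_on {..<r} g"
    and im: "f ` {..<r} = g ` {..<r}" and j: "j < r"
  shows "f j = g j"
proof -
  have "f j \<in> g ` {..<r}" using im j by blast
  then obtain k where k: "k < r" "f j = g k" by auto
  have "j = k" using strict_mono_on_rank[OF f j] strict_mono_on_rank[OF g k(1)] k(2) im by simp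
  then show ?thesis using k by simp
qed

text \<open>The pivot rows are the leading indices of the nonzero vectors of \<open>H\<close>, and the identity
  block in the pivot rows then forces each column.\<close>
lemma is_cref_unique:
  assumes c1: "is_cref m r M1 p1" and c2: "is_cref m r M2 p2"
    and eq: "colspace r M1 = colspace r M2"
  shows "M1 = M2 \<and> p1 = p2"
proof -
  have "p1 j = p2 j" if "j < r" for j
    using strict_mono_on_image_eq[OF is_cref_strict_mono_on[OF c1] is_cref_strict_mono_on[OF c2] _ that]
      lead_index_colspace[OF c1] lead_index_colspace[OF c2] eq by simp
  then have p: "p1 = p2" using is_crefD(3)[OF c1] is_crefD(3)[OF c2] by (metis ext not_le)
  have "col M1 j = col M2 j" if j: "j < r" for j
  proof -
    have "col M1 j \<in> colspace r M2"
      using lincomb_in_colspace[of r "unit_vec j" M1] lincomb_unit_vec[OF j] eq by metis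
    then obtain c where c: "col M1 j = lincomb r c (col M2)" by (rule colspaceE)
    have "c k = unit_vec j k" if k: "k < r" for k
    proof -
      have "c k = lincomb r c (col M2) (p2 k)" using is_cref_lincomb_pivot[OF c2 k] by simp
      also have "\<dots> = M1 (p1 k) j" using c p unfolding col_def by metis
      finally show ?thesis using is_crefD(4)[OF c1 j k] by (simp add: unit_vec_def)
    qed
    then show ?thesis using c lincomb_unit_vec[OF j] lincomb_cong[of r c "unit_vec j"] by simp
  qed
  then have "M1 = M2" using is_crefD(6)[OF c1] is_crefD(6)[OF c2]
    unfolding col_def by (metis ext not_le)
  then show ?thesis using p by simp
qed

lemma echelon_colspace: "is_cref m r M p \<Longrightarrow> echelon m r (colspace r M) = (M, p)"
  unfolding echelon_def by (rule the_equality) (auto dest: is_cref_unique)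

section \<open>Counting subspaces: Gaussian binomials\<close>

definition cref_set :: "nat \<Rightarrow> nat \<Rightarrow> (bmat \<times> (nat \<Rightarrow> nat)) set" where
  "cref_set m r = {(M, p). is_cref m r M p}"

fun gauss_binom :: "nat \<Rightarrow> nat \<Rightarrow> nat" where
  "gauss_binom 0 0 = 1"
| "gauss_binom 0 (Suc r) = 0"
| "gauss_binom (Suc m) 0 = 1"
| "gauss_binom (Suc m) (Suc r) = gauss_binom m r + 2 ^ Suc r * gauss_binom m (Suc r)"

definition pivot_ext :: "nat \<Rightarrow> nat \<Rightarrow> bmat \<times> (nat \<Rightarrow> nat) \<Rightarrow> bmat \<times> (nat \<Rightarrow> nat)" where
  "pivot_ext m r = (\<lambda>(M, p). (adjoin_pivot m r M, p(r := m)))"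

definition row_ext :: "nat \<Rightarrow> (bmat \<times> (nat \<Rightarrow> nat)) \<times> bvec \<Rightarrow> bmat \<times> (nat \<Rightarrow> nat)" where
  "row_ext m = (\<lambda>((M, p), w). (adjoin_row m w M, p))"

lemma cref_set_0: "cref_set m 0 = {(\<lambda>i j. 0, \<lambda>j. 0)}"
  unfolding cref_set_def is_cref_def by (auto simp: fun_eq_iff)

lemma cref_set_0_Suc: "cref_set 0 (Suc r) = {}"
  unfolding cref_set_def is_cref_def by auto

lemma cref_set_Suc_last_pivot:
  assumes cr: "is_cref (Suc m) (Suc r) M p" and pr: "p r = m"
  shows "(M, p) \<in> pivot_ext m r ` cref_set m r"
proof -
  note D = is_crefD[OF cr]
  define M0 where "M0 = (\<lambda>i j. if j = r \<or> i = m then 0 else M i j)"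
  have below: "p j < m" if "j < r" for j using D(1)[OF that] pr by simp
  have "is_cref m r M0 (p(r := 0))"
  proof (rule is_crefI)
    fix j k assume "j < r" "k < r"
    then show "M0 ((p(r := 0)) k) j = (if k = j then 1 else 0)"
      using D(4)[of j k] below[of k] by (simp add: M0_def)
  next
    fix j i assume "j < r" "i < (p(r := 0)) j"
    then show "M0 i j = 0" using D(5)[of j i] below[of j] by (simp add: M0_def)
  qed (use D(1,3,6) below in \<open>auto simp: M0_def\<close>)
  moreover have "adjoin_pivot m r M0 = M"
  proof (intro ext)
    fix i j
    have "M m r = 1" using D(4)[of r r] pr by simp
    moreover have "M m j = 0" if "j \<noteq> r"
      using D(4)[of j r] D(6)[of m j] pr that by (cases "j < r") auto
    moreover have "M i r = 0" if "i \<noteq> m"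
      using D(5)[of r i] D(6)[of i r] pr that by (cases "i < m") auto
    ultimately show "adjoin_pivot m r M0 i j = M i j" by (auto simp: adjoin_pivot_def M0_def)
  qed
  moreover have "(p(r := 0))(r := m) = p" using pr by auto
  ultimately show ?thesis
    by (auto simp: pivot_ext_def cref_set_def image_iff intro!: exI[of _ M0] exI[of _ "p(r := 0)"])
qed

lemma cref_set_Suc_other_pivot:
  assumes cr: "is_cref (Suc m) (Suc r) M p" and pr: "p r \<noteq> m"
  shows "(M, p) \<in> row_ext m ` (cref_set m (Suc r) \<times> binvecs (Suc r))"
proof -
  note D = is_crefD[OF cr]
  have below: "p j < m" if "j < Suc r" for j
    using D(1)[of j r] D(2)[of r] pr that by (cases "j = r") auto
  have "is_cref m (Suc r) (M(m := \<lambda>j. 0)) p"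
  proof (rule is_crefI)
    fix j k assume "j < Suc r" "k < Suc r"
    then show "(M(m := \<lambda>j. 0)) (p k) j = (if k = j then 1 else 0)"
      using D(4)[of j k] below[of k] by simp
  next
    fix j i assume "j < Suc r" "i < p j"
    then show "(M(m := \<lambda>j. 0)) i j = 0" using D(5)[of j i] below[of j] by simp
  qed (use D(1,3,6) below in auto)
  moreover have "M m \<in> binvecs (Suc r)" using D(6) by (simp add: binvecs_def)
  moreover have "adjoin_row m (M m) (M(m := \<lambda>j. 0)) = M" by (auto simp: adjoin_row_def fun_eq_iff)
  ultimately have "row_ext m ((M(m := \<lambda>j. 0), p), M m) = (M, p)"
    and "((M(m := \<lambda>j. 0), p), M m) \<in> cref_set m (Suc r) \<times> binvecs (Suc r)"
    by (simp_all add: row_ext_def cref_set_def)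
  then show ?thesis by (metis image_eqI)
qed

lemma cref_set_Suc:
  "cref_set (Suc m) (Suc r)
    = pivot_ext m r ` cref_set m r \<union> row_ext m ` (cref_set m (Suc r) \<times> binvecs (Suc r))"
proof (intro equalityI subsetI)
  fix x assume "x \<in> cref_set (Suc m) (Suc r)"
  then obtain M p where "x = (M, p)" "is_cref (Suc m) (Suc r) M p" unfolding cref_set_def by auto
  then show "x \<in> pivot_ext m r ` cref_set m r \<union> row_ext m ` (cref_set m (Suc r) \<times> binvecs (Suc r))"
    using cref_set_Suc_last_pivot cref_set_Suc_other_pivot by (cases "p r = m") auto
qed (auto simp: cref_set_def pivot_ext_def row_ext_def is_cref_adjoin_pivot is_cref_adjoin_row)

lemma cref_set_Suc_disjoint:
  "pivot_ext m r ` cref_set m r \<inter> row_ext m ` (cref_set m (Suc r) \<times> binvecs (Suc r)) = {}"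
  by (auto simp: pivot_ext_def row_ext_def cref_set_def dest: is_crefD(2))

lemma inj_on_pivot_ext: "inj_on (pivot_ext m r) (cref_set m r)"
proof (rule inj_on_inverseI)
  fix x assume "x \<in> cref_set m r"
  then show "(\<lambda>(M, p). (\<lambda>i j. if i = m \<and> j = r then 0 else M i j, p(r := 0))) (pivot_ext m r x) = x"
    by (auto simp: cref_set_def pivot_ext_def adjoin_pivot_def fun_eq_iff dest: is_crefD(3,6))
qed

lemma inj_on_row_ext: "inj_on (row_ext m) (cref_set m (Suc r) \<times> binvecs (Suc r))"
proof (rule inj_on_inverseI)
  fix x assume "x \<in> cref_set m (Suc r) \<times> binvecs (Suc r)"
  then show "(\<lambda>(M, p). ((M(m := \<lambda>j. 0), p), M m)) (row_ext m x) = x"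
    by (auto simp: cref_set_def row_ext_def adjoin_row_def fun_eq_iff dest: is_crefD(6))
qed

lemma card_cref_set: "finite (cref_set m r) \<and> card (cref_set m r) = gauss_binom m r"
proof (induction m arbitrary: r)
  case 0
  show ?case by (cases r) (simp_all add: cref_set_0 cref_set_0_Suc)
next
  case (Suc m)
  show ?case
  proof (cases r)
    case 0 then show ?thesis by (simp add: cref_set_0)
  next
    case (Suc r')
    have "finite (pivot_ext m r' ` cref_set m r')"
      and "finite (row_ext m ` (cref_set m (Suc r') \<times> binvecs (Suc r')))"
      using Suc.IH finite_binvecs by simp_all
    moreover have "card (pivot_ext m r' ` cref_set m r') = gauss_binom m r'"
      and "card (row_ext m ` (cref_set m (Suc r') \<times> binvecs (Suc r'))) = gauss_binom m (Suc r') * 2 ^ Suc r'"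
      using card_image[OF inj_on_pivot_ext] card_image[OF inj_on_row_ext] Suc.IH card_binvecs
      by (simp_all add: card_cartesian_product)
    ultimately show ?thesis
      using Suc by (simp add: cref_set_Suc card_Un_disjoint cref_set_Suc_disjoint)
  qed
qed

lemma gauss_binom_eq_0: "m < r \<Longrightarrow> gauss_binom m r = 0"
  by (induction m r rule: gauss_binom.induct) auto

lemma gauss_binom_diag: "gauss_binom m m = 1"
  by (induction m) (simp_all add: gauss_binom_eq_0)

lemma triangle_Suc: "k * (k - 1) div 2 + k = k * (k + 1) div (2::nat)"
proof -
  have "k * (k + 1) = k * (k - 1) + 2 * k" by (cases k) (simp_all add: algebra_simps)
  then show ?thesis by simp
qed

lemma gauss_binomial_theorem:
  "(\<Sum>k\<le>n. gauss_binom n k * 2 ^ (k * (k - 1) div 2) * t ^ k) = (\<Prod>j<n. 1 + 2 ^ j * (t::nat))"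
proof (induction n arbitrary: t)
  case 0 then show ?case by simp
next
  case (Suc n)
  define L where "L s = (\<Sum>k\<le>n. gauss_binom n k * 2 ^ (k * (k - 1) div 2) * s ^ k)" for s :: nat
  have tri: "(2::nat) ^ (Suc k * (Suc k - 1) div 2) = 2 ^ k * 2 ^ (k * (k - 1) div 2)" for k
  proof -
    have "Suc k * (Suc k - 1) div 2 = k * (k - 1) div 2 + k"
      using triangle_Suc[of k] by (simp add: mult.commute)
    then show ?thesis by (simp add: power_add mult.commute)
  qed
  have "(\<Sum>k\<le>Suc n. gauss_binom (Suc n) k * 2 ^ (k * (k - 1) div 2) * t ^ k)
      = 1 + (\<Sum>k\<le>n. gauss_binom (Suc n) (Suc k) * 2 ^ (Suc k * (Suc k - 1) div 2) * t ^ Suc k)"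
    by (subst sum.atMost_Suc_shift) simp
  also have "\<dots> = 1
      + (\<Sum>k\<le>n. 2 ^ Suc k * gauss_binom n (Suc k) * 2 ^ (Suc k * (Suc k - 1) div 2) * t ^ Suc k)
      + (\<Sum>k\<le>n. gauss_binom n k * 2 ^ (Suc k * (Suc k - 1) div 2) * t ^ Suc k)"
    by (simp add: sum.distrib algebra_simps)
  also have "1
      + (\<Sum>k\<le>n. 2 ^ Suc k * gauss_binom n (Suc k) * 2 ^ (Suc k * (Suc k - 1) div 2) * t ^ Suc k)
      = L (2 * t)"
  proof -
    have "L (2 * t) = gauss_binom n 0 * 2 ^ (0 * (0 - 1) div 2) * (2 * t) ^ 0
        + (\<Sum>k\<le>n. gauss_binom n (Suc k) * 2 ^ (Suc k * (Suc k - 1) div 2) * (2 * t) ^ Suc k)"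
      unfolding L_def by (subst sum.atMost_Suc_shift[symmetric]) (simp add: gauss_binom_eq_0)
    moreover have "gauss_binom n 0 = 1" by (cases n) auto
    ultimately show ?thesis by (simp only: power_mult_distrib mult_ac) simp
  qed
  also have "(\<Sum>k\<le>n. gauss_binom n k * 2 ^ (Suc k * (Suc k - 1) div 2) * t ^ Suc k) = t * L (2 * t)"
    unfolding L_def sum_distrib_left
    by (intro sum.cong) (simp_all only: tri power_mult_distrib power_Suc mult_ac)
  also have "L (2 * t) + t * L (2 * t) = (1 + t) * L (2 * t)" by (simp add: algebra_simps)
  also have "L (2 * t) = (\<Prod>j<n. 1 + 2 ^ j * (2 * t))" unfolding L_def by (rule Suc.IH)
  also have "(1 + t) * (\<Prod>j<n. 1 + 2 ^ j * (2 * t)) = (\<Prod>j<Suc n. 1 + 2 ^ j * t)"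
    by (subst prod.lessThan_Suc_shift) (simp add: algebra_simps)
  finally show ?case .
qed

lemma grassmann_eq_image_cref_set: "grassmann m r = (\<lambda>(M, p). colspace r M) ` cref_set m r"
proof (intro equalityI subsetI)
  fix H assume "H \<in> grassmann m r"
  then obtain M p where "is_cref m r M p" "colspace r M = H"
    using grassmannD cref_exists by blast
  then show "H \<in> (\<lambda>(M, p). colspace r M) ` cref_set m r" unfolding cref_set_def by force
qed (auto simp: cref_set_def colspace_in_grassmann)

lemma inj_on_colspace_cref_set: "inj_on (\<lambda>(M, p). colspace r M) (cref_set m r)"
  by (rule inj_onI) (auto simp: cref_set_def dest: is_cref_unique)

lemma card_grassmann: "card (grassmann m r) = gauss_binom m r"
  unfolding grassmann_eq_image_cref_set card_image[OF inj_on_colspace_cref_set]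
  using card_cref_set by simp

lemma finite_grassmann: "finite (grassmann m r)"
  unfolding grassmann_eq_image_cref_set using card_cref_set by simp
section \<open>The coordinate change \<open>a = P\<^sub>I u\<close>\<close>

definition nonpivots :: "nat \<Rightarrow> nat \<Rightarrow> (nat \<Rightarrow> nat) \<Rightarrow> nat list" where
  "nonpivots m r p = sorted_list_of_set ({0..<m} - p ` {0..<r})"

lemma set_nonpivots: "set (nonpivots m r p) = {0..<m} - p ` {0..<r}"
  unfolding nonpivots_def by simp

lemma distinct_nonpivots: "distinct (nonpivots m r p)"
  unfolding nonpivots_def by simp

lemma length_nonpivots:
  assumes cr: "is_cref m r M p"
  shows "length (nonpivots m r p) = m - r"
proof -
  have "inj_on p {0..<r}"
    using strict_mono_on_imp_inj_on[OF is_cref_strict_mono_on[OF cr]] by (simp add: atLeast0LessThan)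
  moreover have "p ` {0..<r} \<subseteq> {0..<m}" using is_crefD(2)[OF cr] by auto
  ultimately show ?thesis
    using card_Diff_subset[of "p ` {0..<r}" "{0..<m}"] by (simp add: nonpivots_def card_image)
qed

lemma Pmat_eq: "Pmat m r M p = (\<lambda>i k. if k < r then M i k
      else if k < m then (if i = nonpivots m r p ! (k - r) then 1 else 0) else 0)"
  unfolding Pmat_def nonpivots_def ..

lemma sum_lessThan_split: "(r::nat) \<le> m \<Longrightarrow> (\<Sum>k<m. f k) = (\<Sum>k<r. f k) + (\<Sum>k\<in>{r..<m}. f k)"
proof -
  assume "r \<le> m"
  then have "sum f {0..<r} + sum f {r..<m} = sum f {0..<m}" by (rule sum.atLeastLessThan_concat[OF le0])
  then show ?thesis by (simp add: atLeast0LessThan)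
qed

lemma mat_vec_Pmat_pivot:
  assumes cr: "is_cref m r M p" and j: "j < r"
  shows "mat_vec m (Pmat m r M p) u (p j) = u j"
proof -
  have rm: "r \<le> m" by (rule is_cref_rank_le[OF cr])
  note L = set_nonpivots distinct_nonpivots length_nonpivots[OF cr]
  have "mat_vec m (Pmat m r M p) u (p j)
      = (\<Sum>k<r. M (p j) k * u k) + (\<Sum>k\<in>{r..<m}. Pmat m r M p (p j) k * u k)"
    unfolding mat_vec_def by (simp add: sum_lessThan_split[OF rm] Pmat_eq)
  also have "(\<Sum>k\<in>{r..<m}. Pmat m r M p (p j) k * u k) = 0"
  proof (rule sum.neutral, intro ballI)
    fix k assume k: "k \<in> {r..<m}"
    then have "nonpivots m r p ! (k - r) \<in> set (nonpivots m r p)" using L(3) by auto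
    moreover have "p j \<in> p ` {0..<r}" using j by simp
    ultimately have "p j \<noteq> nonpivots m r p ! (k - r)" using L(1) by auto
    then show "Pmat m r M p (p j) k * u k = 0" using k by (simp add: Pmat_eq)
  qed
  also have "(\<Sum>k<r. M (p j) k * u k) = (\<Sum>k<r. if k = j then u k else 0)"
    by (rule sum.cong) (use is_crefD(4)[OF cr _ j] in auto)
  also have "\<dots> = u j" using j by simp
  finally show ?thesis by simp
qed

lemma mat_vec_Pmat_nonpivot:
  assumes cr: "is_cref m r M p" and t: "t < m - r"
  shows "mat_vec m (Pmat m r M p) u (nonpivots m r p ! t)
    = (\<Sum>k<r. M (nonpivots m r p ! t) k * u k) + u (r + t)"
proof -
  have rm: "r \<le> m" by (rule is_cref_rank_le[OF cr])
  note L = set_nonpivots distinct_nonpivots length_nonpivots[OF cr]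
  have "mat_vec m (Pmat m r M p) u (nonpivots m r p ! t) = (\<Sum>k<r. M (nonpivots m r p ! t) k * u k)
       + (\<Sum>k\<in>{r..<m}. Pmat m r M p (nonpivots m r p ! t) k * u k)"
    unfolding mat_vec_def by (simp add: sum_lessThan_split[OF rm] Pmat_eq)
  also have "(\<Sum>k\<in>{r..<m}. Pmat m r M p (nonpivots m r p ! t) k * u k)
      = (\<Sum>k\<in>{r..<m}. if k = r + t then u k else 0)"
  proof (rule sum.cong)
    fix k assume k: "k \<in> {r..<m}"
    have "(nonpivots m r p ! t = nonpivots m r p ! (k - r)) = (t = k - r)"
      using nth_eq_iff_index_eq[OF L(2)] L(3) t k by auto
    then show "Pmat m r M p (nonpivots m r p ! t) k * u k = (if k = r + t then u k else 0)"
      using k by (auto simp: Pmat_eq)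
  qed simp
  also have "\<dots> = u (r + t)" using t by simp
  finally show ?thesis .
qed

lemma mat_vec_Pmat_in_binvecs:
  assumes cr: "is_cref m r M p"
  shows "mat_vec m (Pmat m r M p) u \<in> binvecs m"
proof -
  have "Pmat m r M p i k = 0" if "m \<le> i" "k < m" for i k
  proof (cases "k < r")
    case False
    then have "nonpivots m r p ! (k - r) \<in> set (nonpivots m r p)"
      using that length_nonpivots[OF cr] by (intro nth_mem) simp
    then show ?thesis using that False by (auto simp: Pmat_eq set_nonpivots)
  qed (use is_crefD(6)[OF cr, of i k] that in \<open>simp add: Pmat_eq\<close>)
  then show ?thesis by (simp add: binvecs_def mat_vec_def)
qed

lemma mat_vec_add: "mat_vec m P (\<lambda>i. u i + v i) = (\<lambda>i. mat_vec m P u i + mat_vec m P v i)"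
  unfolding mat_vec_def by (simp add: sum.distrib distrib_left)

lemma inj_on_mat_vec_Pmat:
  assumes cr: "is_cref m r M p"
  shows "inj_on (mat_vec m (Pmat m r M p)) (binvecs m)"
proof (rule inj_onI)
  fix u v assume u: "u \<in> binvecs m" and v: "v \<in> binvecs m"
    and eq: "mat_vec m (Pmat m r M p) u = mat_vec m (Pmat m r M p) v"
  have low: "u j = v j" if "j < r" for j using mat_vec_Pmat_pivot[OF cr that] eq by metis
  have high: "u i = v i" if "r \<le> i" "i < m" for i
  proof -
    let ?row = "M (nonpivots m r p ! (i - r))"
    have "(\<Sum>k<r. ?row k * u k) = (\<Sum>k<r. ?row k * v k)" using low by simp
    then show ?thesis
      using mat_vec_Pmat_nonpivot[OF cr, of "i - r" u] mat_vec_Pmat_nonpivot[OF cr, of "i - r" v] eq that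
      by simp
  qed
  show "u = v"
  proof
    fix i show "u i = v i"
      using low[of i] high[of i] u v by (cases "i < r"; cases "i < m") (auto simp: binvecs_def)
  qed
qed

lemma mat_vec_Pmat_image:
  assumes cr: "is_cref m r M p"
  shows "mat_vec m (Pmat m r M p) ` binvecs m = binvecs m"
  by (rule endo_inj_surj[OF finite_binvecs _ inj_on_mat_vec_Pmat[OF cr]])
    (use mat_vec_Pmat_in_binvecs[OF cr] in blast)

lemma mat_vec_Pmat_lincomb:
  assumes cr: "is_cref m r M p" and z: "\<And>k. r \<le> k \<Longrightarrow> z k = 0"
  shows "mat_vec m (Pmat m r M p) z = lincomb r z (col M)"
proof
  fix i
  have rm: "r \<le> m" by (rule is_cref_rank_le[OF cr])
  have "mat_vec m (Pmat m r M p) z i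
      = (\<Sum>k<r. M i k * z k) + (\<Sum>k\<in>{r..<m}. Pmat m r M p i k * z k)"
    unfolding mat_vec_def by (simp add: sum_lessThan_split[OF rm] Pmat_eq)
  also have "(\<Sum>k\<in>{r..<m}. Pmat m r M p i k * z k) = 0" using z by simp
  finally show "mat_vec m (Pmat m r M p) z i = lincomb r z (col M) i"
    unfolding lincomb_def col_def by (simp add: mult.commute)
qed

definition chirp_exponent :: "nat \<Rightarrow> bmat \<Rightarrow> bvec \<Rightarrow> bvec \<Rightarrow> int" where
  "chirp_exponent m S b u =
    (\<Sum>i<m. \<Sum>j<m. lift (u i) * lift (S i j) * lift (u j)) + 2 * (\<Sum>i<m. lift (b i) * lift (u i))"

lemma bssc_mat_vec_Pmat:
  assumes cr: "is_cref m r M p" and u: "u \<in> binvecs m"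
  shows "bssc m r (colspace r M) S b (mat_vec m (Pmat m r M p) u)
     = complex_of_real (2 powr (- real r / 2)) * (\<i> powi chirp_exponent m S b u)
       * of_int (lift (\<Prod>i\<in>{r..<m}. 1 + b i + u i))"
proof -
  have "(THE u'. u' \<in> binvecs m \<and> mat_vec m (Pmat m r M p) u' = mat_vec m (Pmat m r M p) u) = u"
    by (rule the_equality) (use u inj_on_mat_vec_Pmat[OF cr] in \<open>auto dest: inj_onD\<close>)
  then show ?thesis unfolding bssc_def using mat_vec_Pmat_in_binvecs[OF cr, of u] echelon_colspace[OF cr]
    by (simp add: Let_def chirp_exponent_def)
qed

section \<open>A chirp determines its parameters\<close>

lemma i_powi_mod4: "\<i> powi e = \<i> ^ nat (e mod 4)"
proof -
  have "\<i> powi e = \<i> powi (4 * (e div 4)) * \<i> powi (e mod 4)"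
    by (subst power_int_add[symmetric]) simp_all
  also have "\<i> powi (4 * (e div 4)) = 1" by (simp add: power_int_mult)
  also have "\<i> powi (e mod 4) = \<i> ^ nat (e mod 4)" by (simp add: power_int_def)
  finally show ?thesis by simp
qed

lemma i_powi_eq_imp_mod4_eq:
  assumes "\<i> powi a = \<i> powi b"
  shows "a mod 4 = b mod 4"
proof -
  have "\<i> ^ nat (a mod 4) = \<i> ^ nat (b mod 4)" using assms by (simp only: i_powi_mod4)
  moreover have "nat (a mod 4) \<in> {0, 1, 2, 3}" "nat (b mod 4) \<in> {0, 1, 2, 3}" by auto
  ultimately have "nat (a mod 4) = nat (b mod 4)" by (auto simp: numeral_eq_Suc complex_eq_iff)
  then show ?thesis by simp
qed

lemma i_powi_nonzero: "\<i> powi e \<noteq> 0"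
  using norm_power_int[of \<i> e] by auto

lemma prod_bit: "finite A \<Longrightarrow> (\<Prod>i\<in>A. x i) = (if \<forall>i\<in>A. x i = 1 then 1 else (0::bit))"
  by (induction A rule: finite_induct) auto

lemma lift_of_indicator:
  "lift (\<Prod>i\<in>{(r::nat)..<m}. 1 + b i + u i) = (if \<forall>i\<in>{r..<m}. u i = b i then 1 else 0)"
proof -
  have "(\<Prod>i\<in>{r..<m}. 1 + b i + u i) = (if \<forall>i\<in>{r..<m}. 1 + b i + u i = 1 then 1 else 0)"
    by (rule prod_bit) simp
  moreover have "(1::bit) + x + y = 1 \<longleftrightarrow> y = x" for x y by (cases x; cases y) simp_all
  ultimately show ?thesis by simp
qed

(* The coordinates u where the factor f(b, u, r) of the chirp equals 1. *)
definition chirp_coords :: "nat \<Rightarrow> nat \<Rightarrow> bvec \<Rightarrow> bvec set" where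
  "chirp_coords m r b = {u \<in> binvecs m. \<forall>i\<in>{r..<m}. u i = b i}"

definition fill_coords :: "nat \<Rightarrow> nat \<Rightarrow> bvec \<Rightarrow> bvec \<Rightarrow> bvec" where
  "fill_coords m r b x = (\<lambda>i. if i < m then if i < r then x i else b i else 0)"

lemma fill_coords_in_chirp_coords: "fill_coords m r b x \<in> chirp_coords m r b"
  unfolding fill_coords_def chirp_coords_def binvecs_def by auto

lemma bssc_chirp_coords:
  assumes cr: "is_cref m r M p" and u: "u \<in> chirp_coords m r b"
  shows "bssc m r (colspace r M) S b (mat_vec m (Pmat m r M p) u)
    = complex_of_real (2 powr (- real r / 2)) * \<i> powi chirp_exponent m S b u"
  using bssc_mat_vec_Pmat[OF cr, of u S b] u unfolding chirp_coords_def lift_of_indicator by auto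

lemma bssc_not_chirp_coords:
  assumes cr: "is_cref m r M p" and u: "u \<in> binvecs m" "u \<notin> chirp_coords m r b"
  shows "bssc m r (colspace r M) S b (mat_vec m (Pmat m r M p) u) = 0"
  using bssc_mat_vec_Pmat[OF cr, of u S b] u unfolding chirp_coords_def lift_of_indicator by auto

lemma bssc_nonzero_imp_chirp_coords:
  assumes cr: "is_cref m r M p" and nz: "bssc m r (colspace r M) S b a \<noteq> 0"
  obtains u where "u \<in> chirp_coords m r b" "a = mat_vec m (Pmat m r M p) u"
proof -
  have "a \<in> binvecs m" using nz by (rule contrapos_np) (simp add: bssc_def)
  then obtain u where "u \<in> binvecs m" "a = mat_vec m (Pmat m r M p) u"
    using mat_vec_Pmat_image[OF cr] by blast
  then show ?thesis using that bssc_not_chirp_coords[OF cr] nz by metis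
qed

lemma norm_bssc:
  assumes cr: "is_cref m r M p" and nz: "bssc m r (colspace r M) S b a \<noteq> 0"
  shows "norm (bssc m r (colspace r M) S b a) = 2 powr (- real r / 2)"
  using nz by (rule bssc_nonzero_imp_chirp_coords[OF cr])
    (simp add: bssc_chirp_coords[OF cr] norm_mult norm_power_int)

lemma bssc_support:
  assumes cr: "is_cref m r M p"
  shows "{a. bssc m r (colspace r M) S b a \<noteq> 0} = mat_vec m (Pmat m r M p) ` chirp_coords m r b"
  using bssc_nonzero_imp_chirp_coords[OF cr] bssc_chirp_coords[OF cr] i_powi_nonzero by fastforce

definition differences :: "bvec set \<Rightarrow> bvec set" where
  "differences A = {(\<lambda>i. x i + y i) | x y. x \<in> A \<and> y \<in> A}"

lemma differences_bssc_support:
  assumes cr: "is_cref m r M p"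
  shows "differences (mat_vec m (Pmat m r M p) ` chirp_coords m r b) = colspace r M"
  unfolding differences_def
proof (intro equalityI subsetI)
  let ?P = "mat_vec m (Pmat m r M p)"
  fix z assume "z \<in> {(\<lambda>i. x i + y i) | x y. x \<in> ?P ` chirp_coords m r b \<and> y \<in> ?P ` chirp_coords m r b}"
  then obtain u v where uv: "u \<in> chirp_coords m r b" "v \<in> chirp_coords m r b"
    and z: "z = (\<lambda>i. ?P u i + ?P v i)" by blast
  have "u k + v k = 0" if "r \<le> k" for k
    using uv that by (cases "k < m") (auto simp: chirp_coords_def binvecs_def)
  then have "?P (\<lambda>i. u i + v i) = lincomb r (\<lambda>i. u i + v i) (col M)"
    by (rule mat_vec_Pmat_lincomb[OF cr])
  then show "z \<in> colspace r M" using z mat_vec_add lincomb_in_colspace by metis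
next
  let ?P = "mat_vec m (Pmat m r M p)"
  fix h assume "h \<in> colspace r M"
  then obtain c where c: "h = lincomb r c (col M)" by (rule colspaceE)
  define z where "z = (\<lambda>k. if k < r then c k else (0::bit))"
  let ?u0 = "fill_coords m r b (\<lambda>i. 0)" and ?u1 = "fill_coords m r b z"
  have "(\<lambda>i. ?u1 i + ?u0 i) = z"
    using is_cref_rank_le[OF cr] by (auto simp: fill_coords_def z_def fun_eq_iff)
  then have "(\<lambda>i. ?P ?u1 i + ?P ?u0 i) = ?P z" using mat_vec_add by metis
  also have "\<dots> = lincomb r z (col M)" by (rule mat_vec_Pmat_lincomb[OF cr]) (simp add: z_def)
  also have "\<dots> = h" unfolding c z_def by (rule lincomb_cong) simp
  finally show "h \<in> {(\<lambda>i. x i + y i) | x y. x \<in> ?P ` chirp_coords m r b \<and> y \<in> ?P ` chirp_coords m r b}"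
    using fill_coords_in_chirp_coords by blast
qed

definition quad_form :: "nat \<Rightarrow> bmat \<Rightarrow> bvec \<Rightarrow> int" where
  "quad_form r S x = (\<Sum>i<r. \<Sum>j<r. lift (x i) * lift (S i j) * lift (x j))"

lemma sum_symmats_restrict:
  assumes "S \<in> symmats r" "r \<le> m"
  shows "(\<Sum>i<m. \<Sum>j<m. f i * lift (S i j) * g j) = (\<Sum>i<r. \<Sum>j<r. f i * lift (S i j) * g j)"
proof -
  have S0: "S i j = 0" if "r \<le> i \<or> r \<le> j" for i j using assms(1) that by (auto simp: symmats_def)
  have "(\<Sum>j\<in>{r..<m}. f i * lift (S i j) * g j) = 0" for i using S0 by simp
  moreover have "(\<Sum>i\<in>{r..<m}. \<Sum>j<r. f i * lift (S i j) * g j) = 0" using S0 by simp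
  ultimately show ?thesis by (simp add: sum_lessThan_split[OF assms(2)])
qed

lemma chirp_exponent_fill_coords:
  assumes S: "S \<in> symmats r" and rm: "r \<le> m" and b': "\<And>i. r \<le> i \<Longrightarrow> i < m \<Longrightarrow> b i = b' i"
  shows "chirp_exponent m S b (fill_coords m r b' x)
    = quad_form r S x + 2 * (\<Sum>i<r. lift (b i) * lift (x i)) + 2 * (\<Sum>i\<in>{r..<m}. lift (b i))"
proof -
  let ?u = "fill_coords m r b' x"
  have "(\<Sum>i<m. \<Sum>j<m. lift (?u i) * lift (S i j) * lift (?u j)) = quad_form r S x"
    unfolding sum_symmats_restrict[OF S rm] quad_form_def using rm by (simp add: fill_coords_def)
  moreover have "(\<Sum>i<m. lift (b i) * lift (?u i))
      = (\<Sum>i<r. lift (b i) * lift (x i)) + (\<Sum>i\<in>{r..<m}. lift (b i))"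
  proof -
    have "lift (b i) * lift (b i) = lift (b i)" for i by (cases "b i") simp_all
    then have "(\<Sum>i\<in>{r..<m}. lift (b i) * lift (?u i)) = (\<Sum>i\<in>{r..<m}. lift (b i))"
      by (intro sum.cong) (simp_all add: fill_coords_def b'[symmetric])
    moreover have "(\<Sum>i<r. lift (b i) * lift (?u i)) = (\<Sum>i<r. lift (b i) * lift (x i))"
      using rm by (simp add: fill_coords_def)
    ultimately show ?thesis by (simp add: sum_lessThan_split[OF rm])
  qed
  ultimately show ?thesis by (simp add: chirp_exponent_def)
qed

lemma lift_if: "lift (if P then 1 else 0) = (if P then 1 else 0)"
  by simp

lemma lift_pair:
  "k \<noteq> l \<Longrightarrow> lift (if i = k \<or> i = l then 1 else 0) = (if i = k then 1 else 0) + (if i = l then 1 else 0)"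
  by auto

lemma quad_form_single:
  assumes "k < r"
  shows "quad_form r S (\<lambda>i. if i = k then 1 else 0) = lift (S k k)"
  using assms unfolding quad_form_def
  by (simp add: lift_if if_distrib[of "\<lambda>x. _ * x"] if_distrib[of "\<lambda>x. x * _"] cong: if_cong)

lemma quad_form_pair:
  assumes "k < r" "l < r" "k \<noteq> l" "S k l = S l k"
  shows "quad_form r S (\<lambda>i. if i = k \<or> i = l then 1 else 0)
    = lift (S k k) + lift (S l l) + 2 * lift (S k l)"
  using assms unfolding quad_form_def
  by (simp add: lift_pair distrib_left distrib_right sum.distrib
      if_distrib[of "\<lambda>x. _ * x"] if_distrib[of "\<lambda>x. x * _"] cong: if_cong)

lemma sum_lift_single:
  "(k::nat) < r \<Longrightarrow> (\<Sum>i<r. lift (b i) * lift (if i = k then 1 else 0)) = lift (b k)"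
  by (simp add: lift_if if_distrib[of "\<lambda>x. _ * x"] cong: if_cong)

lemma sum_lift_pair:
  assumes "k < r" "l < r" "k \<noteq> (l::nat)"
  shows "(\<Sum>i<r. lift (b i) * lift (if i = k \<or> i = l then 1 else 0)) = lift (b k) + lift (b l)"
  using assms by (simp add: lift_pair distrib_left sum.distrib if_distrib[of "\<lambda>x. _ * x"] cong: if_cong)

lemma mod_add_right_cancel_int: "((a::int) + K) mod n = (b + K) mod n \<Longrightarrow> a mod n = b mod n"
  by (metis add_diff_cancel_right' mod_diff_left_eq)

lemma mod4_eq_imp_eq:
  assumes "(lift s1 + 2 * lift c1 + K) mod 4 = (lift s2 + 2 * lift c2 + K) mod 4"
  shows "s1 = s2 \<and> c1 = c2"
  using mod_add_right_cancel_int[OF assms] by (cases s1; cases s2; cases c1; cases c2) simp_all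

lemma mod4_eq_imp_eq_even:
  assumes "(A + 2 * lift s1) mod 4 = (A + 2 * lift s2) mod 4"
  shows "s1 = s2"
  using mod_add_right_cancel_int[of "2 * lift s1" A 4 "2 * lift s2"] assms
  by (cases s1; cases s2) (simp_all add: add.commute)

lemma quad_form_mod4_unique:
  assumes S1: "S1 \<in> symmats r" and S2: "S2 \<in> symmats r"
    and eq: "\<And>x. (quad_form r S1 x + 2 * (\<Sum>i<r. lift (b1 i) * lift (x i)) + K) mod 4
              = (quad_form r S2 x + 2 * (\<Sum>i<r. lift (b2 i) * lift (x i)) + K) mod 4"
  shows "S1 = S2 \<and> (\<forall>k<r. b1 k = b2 k)"
proof -
  have diag: "S1 k k = S2 k k \<and> b1 k = b2 k" if k: "k < r" for k
    using eq[of "\<lambda>i. if i = k then 1 else 0"] quad_form_single[OF k] sum_lift_single[OF k]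
    by (intro mod4_eq_imp_eq) simp
  have off: "S1 k l = S2 k l" if k: "k < r" and l: "l < r" and kl: "k \<noteq> l" for k l
  proof -
    have sym: "S1 k l = S1 l k" "S2 k l = S2 l k" using S1 S2 by (simp_all add: symmats_def)
    define A where "A = lift (S1 k k) + lift (S1 l l) + 2 * (lift (b1 k) + lift (b1 l)) + K"
    have "(A + 2 * lift (S1 k l)) mod 4 = (A + 2 * lift (S2 k l)) mod 4"
      using eq[of "\<lambda>i. if i = k \<or> i = l then 1 else 0"] diag[OF k] diag[OF l]
        quad_form_pair[OF k l kl sym(1)] quad_form_pair[OF k l kl sym(2)]
        sum_lift_pair[OF k l kl, of b1] sum_lift_pair[OF k l kl, of b2]
      unfolding A_def by (simp add: algebra_simps)
    then show ?thesis by (rule mod4_eq_imp_eq_even)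
  qed
  have "S1 i j = S2 i j" for i j
    using diag[of i] off[of i j] S1 S2 by (cases "i < r \<and> j < r") (auto simp: symmats_def)
  then show ?thesis using diag by auto
qed

lemma bssc_eq_imp_rank_eq:
  assumes c1: "is_cref m r1 M1 p1" and c2: "is_cref m r2 M2 p2"
    and eq: "bssc m r1 (colspace r1 M1) S1 b1 = bssc m r2 (colspace r2 M2) S2 b2"
  shows "r1 = r2"
proof -
  define a where "a = mat_vec m (Pmat m r1 M1 p1) (fill_coords m r1 b1 (\<lambda>i. 0))"
  have nz: "bssc m r1 (colspace r1 M1) S1 b1 a \<noteq> 0"
    using bssc_support[OF c1, of S1 b1] fill_coords_in_chirp_coords unfolding a_def by blast
  then have "(2::real) powr (- real r1 / 2) = 2 powr (- real r2 / 2)"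
    using norm_bssc[OF c1 nz] norm_bssc[OF c2, of S2 b2 a] eq by simp
  then show ?thesis by (simp add: powr_inj)
qed

lemma bssc_inj:
  assumes c1: "is_cref m r M1 p1" and c2: "is_cref m r M2 p2"
    and S1: "S1 \<in> symmats r" and S2: "S2 \<in> symmats r"
    and b1: "b1 \<in> binvecs m" and b2: "b2 \<in> binvecs m"
    and eq: "bssc m r (colspace r M1) S1 b1 = bssc m r (colspace r M2) S2 b2"
  shows "colspace r M1 = colspace r M2 \<and> S1 = S2 \<and> b1 = b2"
proof -
  have rm: "r \<le> m" using is_cref_rank_le[OF c1] .
  have supp: "mat_vec m (Pmat m r M1 p1) ` chirp_coords m r b1
      = mat_vec m (Pmat m r M2 p2) ` chirp_coords m r b2"
    using bssc_support[OF c1, of S1 b1] bssc_support[OF c2, of S2 b2] eq by simp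
  have H: "colspace r M1 = colspace r M2"
    using differences_bssc_support[OF c1, of b1] differences_bssc_support[OF c2, of b2] supp by simp
  then have MP: "M1 = M2 \<and> p1 = p2" by (rule is_cref_unique[OF c1 c2])
  have "chirp_coords m r b1 = chirp_coords m r b2"
    using supp MP inj_on_image_eq_iff[OF inj_on_mat_vec_Pmat[OF c1]] by (auto simp: chirp_coords_def)
  then have b_high: "b2 i = b1 i" if "r \<le> i" "i < m" for i
    using fill_coords_in_chirp_coords[of m r b1 "\<lambda>i. 0"] that by (auto simp: chirp_coords_def fill_coords_def)
  define K where "K = 2 * (\<Sum>i\<in>{r..<m}. lift (b1 i))"
  have "(quad_form r S1 x + 2 * (\<Sum>i<r. lift (b1 i) * lift (x i)) + K) mod 4
      = (quad_form r S2 x + 2 * (\<Sum>i<r. lift (b2 i) * lift (x i)) + K) mod 4" for x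
  proof -
    let ?u = "fill_coords m r b1 x"
    have "?u \<in> chirp_coords m r b1" "?u \<in> chirp_coords m r b2"
      using fill_coords_in_chirp_coords \<open>chirp_coords m r b1 = chirp_coords m r b2\<close> by auto
    then have "complex_of_real (2 powr (- real r / 2)) * \<i> powi chirp_exponent m S1 b1 ?u
        = complex_of_real (2 powr (- real r / 2)) * \<i> powi chirp_exponent m S2 b2 ?u"
      using bssc_chirp_coords[OF c1, of ?u b1 S1] bssc_chirp_coords[OF c2, of ?u b2 S2] eq MP by metis
    then have "chirp_exponent m S1 b1 ?u mod 4 = chirp_exponent m S2 b2 ?u mod 4"
      by (intro i_powi_eq_imp_mod4_eq) simp
    moreover have "(\<Sum>i\<in>{r..<m}. lift (b2 i)) = (\<Sum>i\<in>{r..<m}. lift (b1 i))"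
      by (rule sum.cong) (simp_all add: b_high)
    ultimately show ?thesis
      using chirp_exponent_fill_coords[OF S1 rm, of b1 b1 x] chirp_exponent_fill_coords[OF S2 rm, of b2 b1 x]
        b_high unfolding K_def by simp
  qed
  then have "S1 = S2 \<and> (\<forall>k<r. b1 k = b2 k)" by (rule quad_form_mod4_unique[OF S1 S2])
  moreover have "b1 i = b2 i" if "r \<le> i" for i
    using b_high[of i] b1 b2 that by (cases "i < m") (auto simp: binvecs_def)
  ultimately show ?thesis using H by (metis ext not_le)
qed

section \<open>Counting chirps\<close>

definition upper_triangle :: "nat \<Rightarrow> (nat \<times> nat) set" where
  "upper_triangle r = {(i, j). i \<le> j \<and> j < r}"

lemma finite_upper_triangle: "finite (upper_triangle r)"
  by (rule finite_subset[of _ "{..<r} \<times> {..<r}"]) (auto simp: upper_triangle_def)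

lemma card_upper_triangle: "card (upper_triangle r) = r * (r + 1) div 2"
proof -
  have "2 * card (upper_triangle r) = r * (r + 1)"
  proof (induction r)
    case 0 then show ?case by (simp add: upper_triangle_def)
  next
    case (Suc r)
    have "upper_triangle (Suc r) = upper_triangle r \<union> (\<lambda>i. (i, r)) ` {..r}"
      and "upper_triangle r \<inter> (\<lambda>i. (i, r)) ` {..r} = {}"
      by (auto simp: upper_triangle_def)
    moreover have "card ((\<lambda>i. (i, r)) ` {..r}) = Suc r" by (subst card_image) (auto simp: inj_on_def)
    ultimately show ?case using Suc.IH by (simp add: card_Un_disjoint finite_upper_triangle)
  qed
  then show ?thesis by simp
qed

lemma bij_betw_symmats_PiE:
  "bij_betw (\<lambda>S. restrict (\<lambda>(i, j). S i j) (upper_triangle r)) (symmats r)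
    (PiE (upper_triangle r) (\<lambda>_. UNIV::bit set))"
proof (rule bij_betwI')
  fix S1 S2 assume S1: "S1 \<in> symmats r" and S2: "S2 \<in> symmats r"
  show "(restrict (\<lambda>(i, j). S1 i j) (upper_triangle r) = restrict (\<lambda>(i, j). S2 i j) (upper_triangle r))
    = (S1 = S2)"
  proof
    assume eq: "restrict (\<lambda>(i, j). S1 i j) (upper_triangle r) = restrict (\<lambda>(i, j). S2 i j) (upper_triangle r)"
    have up: "S1 i j = S2 i j" if "i \<le> j" "j < r" for i j
      using fun_cong[OF eq, of "(i, j)"] that by (simp add: upper_triangle_def)
    show "S1 = S2"
    proof (intro ext)
      fix i j show "S1 i j = S2 i j"
        using up[of i j] up[of j i] S1 S2 by (cases "i < r \<and> j < r"; cases "i \<le> j") (auto simp: symmats_def)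
    qed
  qed simp
next
  fix f assume f: "f \<in> PiE (upper_triangle r) (\<lambda>_. UNIV::bit set)"
  define S where "S = (\<lambda>i j. if i \<le> j \<and> j < r then f (i, j) else if j < i \<and> i < r then f (j, i) else 0)"
  have "S \<in> symmats r" unfolding symmats_def S_def by auto
  moreover have "f = restrict (\<lambda>(i, j). S i j) (upper_triangle r)"
    using f by (auto simp: S_def upper_triangle_def PiE_def extensional_def fun_eq_iff)
  ultimately show "\<exists>S\<in>symmats r. f = restrict (\<lambda>(i, j). S i j) (upper_triangle r)" by blast
qed simp

lemma card_symmats: "card (symmats r) = 2 ^ (r * (r + 1) div 2)"
  using bij_betw_same_card[OF bij_betw_symmats_PiE]
  by (simp add: card_PiE card_UNIV_bit finite_upper_triangle card_upper_triangle)

lemma finite_symmats: "finite (symmats r)"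
  using bij_betw_finite[OF bij_betw_symmats_PiE]
  by (simp add: finite_PiE finite_upper_triangle UNIV_bit)

definition chirp_params :: "nat \<Rightarrow> nat set \<Rightarrow> (nat \<times> bvec set \<times> bmat \<times> bvec) set" where
  "chirp_params m R = Sigma R (\<lambda>r. grassmann m r \<times> symmats r \<times> binvecs m)"

definition bssc_of :: "nat \<Rightarrow> nat \<times> bvec set \<times> bmat \<times> bvec \<Rightarrow> bvec \<Rightarrow> complex" where
  "bssc_of m = (\<lambda>(r, H, S, b). bssc m r H S b)"

lemma inj_on_bssc_of: "inj_on (bssc_of m) (chirp_params m R)"
proof (rule inj_onI)
  fix x y assume x: "x \<in> chirp_params m R" and y: "y \<in> chirp_params m R"
    and eq: "bssc_of m x = bssc_of m y"
  obtain r1 H1 S1 b1 r2 H2 S2 b2 where xy: "x = (r1, H1, S1, b1)" "y = (r2, H2, S2, b2)"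
    by (cases x, cases y) auto
  have h1: "H1 \<in> grassmann m r1" "S1 \<in> symmats r1" "b1 \<in> binvecs m"
    and h2: "H2 \<in> grassmann m r2" "S2 \<in> symmats r2" "b2 \<in> binvecs m"
    using x y xy unfolding chirp_params_def by auto
  obtain M1 p1 where c1: "is_cref m r1 M1 p1" "colspace r1 M1 = H1"
    using grassmannD[OF h1(1)] cref_exists by blast
  obtain M2 p2 where c2: "is_cref m r2 M2 p2" "colspace r2 M2 = H2"
    using grassmannD[OF h2(1)] cref_exists by blast
  have eq': "bssc m r1 (colspace r1 M1) S1 b1 = bssc m r2 (colspace r2 M2) S2 b2"
    using eq xy c1 c2 unfolding bssc_of_def by simp
  then have r: "r1 = r2" by (rule bssc_eq_imp_rank_eq[OF c1(1) c2(1)])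
  show "x = y"
    using bssc_inj[OF c1(1) c2(1)[folded r] h1(2) h2(2)[folded r] h1(3) h2(3) eq'[folded r]] xy c1 c2 r
    by simp
qed

lemma V_BSSC_eq: "V_BSSC m = bssc_of m ` chirp_params m {..m}"
  unfolding V_BSSC_def chirp_params_def bssc_of_def by force

lemma V_BC_eq: "V_BC m = bssc_of m ` chirp_params m {m}"
  unfolding V_BC_def chirp_params_def bssc_of_def by force

lemma card_chirp_params:
  "finite R \<Longrightarrow> card (chirp_params m R) = (\<Sum>r\<in>R. gauss_binom m r * (2 ^ (r * (r + 1) div 2) * 2 ^ m))"
  unfolding chirp_params_def
  by (simp add: finite_grassmann finite_symmats finite_binvecs card_cartesian_product
      card_grassmann card_symmats card_binvecs)

lemma card_V_BSSC: "card (V_BSSC m) = 2 ^ m * (\<Prod>r\<in>{1..m}. 2 ^ r + 1)"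
proof -
  have "card (V_BSSC m) = (\<Sum>r\<le>m. gauss_binom m r * (2 ^ (r * (r + 1) div 2) * 2 ^ m))"
    unfolding V_BSSC_eq card_image[OF inj_on_bssc_of] by (simp add: card_chirp_params)
  also have "\<dots> = 2 ^ m * (\<Sum>r\<le>m. gauss_binom m r * 2 ^ (r * (r - 1) div 2) * 2 ^ r)"
  proof -
    have "(2::nat) ^ (r * (r + 1) div 2) = 2 ^ (r * (r - 1) div 2) * 2 ^ r" for r
      using triangle_Suc[of r] by (metis power_add)
    then show ?thesis by (simp add: sum_distrib_left algebra_simps)
  qed
  also have "\<dots> = 2 ^ m * (\<Prod>j<m. 1 + 2 ^ j * 2)" by (simp only: gauss_binomial_theorem)
  also have "(\<Prod>j<m. 1 + 2 ^ j * 2) = (\<Prod>r\<in>{1..m}. 2 ^ r + (1::nat))"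
    by (induction m) (simp_all add: algebra_simps)
  finally show ?thesis .
qed

lemma triangle_add: "m * (m + 3) div 2 = m * (m + 1) div 2 + (m::nat)"
proof -
  have "m * (m + 3) = m * (m + 1) + 2 * m" by (simp add: algebra_simps)
  then show ?thesis by simp
qed

lemma card_V_BC: "card (V_BC m) = 2 ^ (m * (m + 3) div 2)"
proof -
  have "card (V_BC m) = gauss_binom m m * (2 ^ (m * (m + 1) div 2) * 2 ^ m)"
    unfolding V_BC_eq card_image[OF inj_on_bssc_of] by (simp add: card_chirp_params)
  also have "\<dots> = 2 ^ (m * (m + 1) div 2 + m)" by (simp add: gauss_binom_diag power_add)
  finally show ?thesis by (simp add: triangle_add)
qed

lemma prod_power_two: "(\<Prod>r\<in>{1..m}. (2::nat) ^ r) = 2 ^ (m * (m + 1) div 2)"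
proof (induction m)
  case (Suc m)
  have "Suc m * (Suc m + 1) div 2 = m * (m + 1) div 2 + Suc m"
    using triangle_Suc[of "Suc m"] by (simp add: algebra_simps)
  then show ?case using Suc.IH by (simp add: power_add)
qed simp

section \<open>The ratio of the two counts\<close>

definition chirp_ratio :: "nat \<Rightarrow> real" where
  "chirp_ratio n = (\<Prod>r\<in>{1..n}. 1 + 2 powr (- real r))"

lemma two_powr_minus_nat: "2 powr (- real r) = 1 / (2::real) ^ r"
  by (simp add: powr_minus powr_realpow divide_inverse)

lemma chirp_ratio_Suc: "chirp_ratio (Suc n) = chirp_ratio n * (1 + 1 / 2 ^ Suc n)"
  unfolding chirp_ratio_def by (simp add: two_powr_minus_nat del: power_Suc)

lemma chirp_ratio_pos: "chirp_ratio n > 0"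
  unfolding chirp_ratio_def by (intro prod_pos) (simp add: two_powr_minus_nat add_pos_pos)

lemma chirp_ratio_lessThan: "chirp_ratio n = (\<Prod>r<n. 1 + 2 powr (- real (Suc r)))"
  unfolding chirp_ratio_def by (induction n) simp_all

lemma strict_mono_chirp_ratio: "strict_mono chirp_ratio"
  by (rule strict_mono_Suc_iff[THEN iffD2]) (simp add: chirp_ratio_Suc chirp_ratio_pos)

lemma convergent_prod_chirp_factors:
  "convergent_prod (\<lambda>r::nat. 1 + 2 powr (- real (Suc r)))"
proof -
  have "(\<lambda>r::nat. 2 powr (- real (Suc r))) = (\<lambda>r. (1/2) * (1/2::real) ^ r)"
    by (rule ext, subst two_powr_minus_nat) (simp add: power_one_over)
  moreover have "summable (\<lambda>r::nat. (1/2) * (1/2::real) ^ r)"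
    by (intro summable_mult summable_geometric) simp
  ultimately show ?thesis by (subst convergent_prod_iff_summable_real) auto
qed

lemma chirp_ratio_LIMSEQ:
  "chirp_ratio \<longlonglongrightarrow> prodinf (\<lambda>r::nat. 1 + 2 powr (- real (Suc r)))"
proof (rule LIMSEQ_imp_Suc)
  show "(\<lambda>n. chirp_ratio (Suc n)) \<longlonglongrightarrow> prodinf (\<lambda>r::nat. 1 + 2 powr (- real (Suc r)))"
    using convergent_prod_LIMSEQ[OF convergent_prod_chirp_factors]
    by (simp add: chirp_ratio_lessThan lessThan_Suc_atMost)
qed

text \<open>For \<open>x \<ge> 0\<close> and \<open>y \<le> 1/2\<close> one has \<open>(1 + 2(y - x))(1 + x/2) \<le> 1 + 2(y - x/2)\<close>,
  which propagates the tail estimate by one factor.\<close>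
lemma chirp_ratio_add_le:
  assumes "K \<ge> 1"
  shows "chirp_ratio (K + n) \<le> chirp_ratio K * (1 + 2 * (1 / 2 ^ K - 1 / 2 ^ (K + n)))"
proof (induction n)
  case 0 then show ?case by simp
next
  case (Suc n)
  define x :: real where "x = 1 / 2 ^ (K + n)"
  define y :: real where "y = 1 / 2 ^ K"
  have "x \<ge> 0" unfolding x_def by simp
  have "(2::real) ^ 1 \<le> 2 ^ K" by (rule power_increasing) (use assms in auto)
  then have "y \<le> 1/2" unfolding y_def by (simp add: divide_simps)
  have step: "(1 + 2 * (y - x)) * (1 + x / 2) \<le> 1 + 2 * (y - x / 2)"
  proof -
    have "x * (y - x - 1/2) \<le> 0" using \<open>x \<ge> 0\<close> \<open>y \<le> 1/2\<close> by (intro mult_nonneg_nonpos) auto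
    then show ?thesis by (simp add: algebra_simps)
  qed
  have "chirp_ratio (K + Suc n) = chirp_ratio (K + n) * (1 + x / 2)"
    unfolding x_def by (simp add: chirp_ratio_Suc)
  also have "\<dots> \<le> chirp_ratio K * (1 + 2 * (y - x)) * (1 + x / 2)"
    using Suc \<open>x \<ge> 0\<close> unfolding x_def y_def by (intro mult_right_mono) auto
  also have "\<dots> \<le> chirp_ratio K * (1 + 2 * (y - x / 2))"
    using step chirp_ratio_pos[of K] by (simp only: mult.assoc mult_left_mono less_imp_le)
  finally show ?case unfolding x_def y_def by simp
qed

lemma chirp_ratio_le: "chirp_ratio n \<le> chirp_ratio 15 * (1 + 2 / 2 ^ 15)"
proof (cases "n \<le> 15")
  case True
  then have "chirp_ratio n \<le> chirp_ratio 15"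
    using strict_mono_leD[OF strict_mono_chirp_ratio] by blast
  also have "\<dots> \<le> chirp_ratio 15 * (1 + 2 / 2 ^ 15)" using chirp_ratio_pos[of 15] by simp
  finally show ?thesis .
next
  case False
  then obtain k where "n = 15 + k" by (metis le_add_diff_inverse nat_le_linear)
  then have "chirp_ratio n \<le> chirp_ratio 15 * (1 + 2 * (1 / 2 ^ 15 - 1 / 2 ^ (15 + k)))"
    using chirp_ratio_add_le[of 15 k] by simp
  also have "\<dots> \<le> chirp_ratio 15 * (1 + 2 / 2 ^ 15)"
    using chirp_ratio_pos[of 15] by (intro mult_left_mono) auto
  finally show ?thesis .
qed

lemma chirp_ratio_15: "chirp_ratio 15 = (\<Prod>r<15. 1 + 1 / 2 ^ Suc r)"
  unfolding chirp_ratio_lessThan two_powr_minus_nat ..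

lemma chirp_ratio_limit_bounds:
  "2.384 < prodinf (\<lambda>r::nat. 1 + 2 powr (- real (Suc r)))"
  "prodinf (\<lambda>r::nat. 1 + 2 powr (- real (Suc r))) < 2.385"
proof -
  have "2.384 < chirp_ratio 15"
    unfolding chirp_ratio_15 by (simp add: numeral_eq_Suc lessThan_Suc)
  also have "chirp_ratio 15 \<le> prodinf (\<lambda>r::nat. 1 + 2 powr (- real (Suc r)))"
    by (rule incseq_le[OF _ chirp_ratio_LIMSEQ])
      (simp add: incseq_def strict_mono_leD[OF strict_mono_chirp_ratio])
  finally show "2.384 < prodinf (\<lambda>r::nat. 1 + 2 powr (- real (Suc r)))" .
  have "prodinf (\<lambda>r::nat. 1 + 2 powr (- real (Suc r))) \<le> chirp_ratio 15 * (1 + 2 / 2 ^ 15)"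
    by (rule LIMSEQ_le_const2[OF chirp_ratio_LIMSEQ]) (use chirp_ratio_le in blast)
  also have "\<dots> < 2.385"
    unfolding chirp_ratio_15 by (simp add: numeral_eq_Suc lessThan_Suc)
  finally show "prodinf (\<lambda>r::nat. 1 + 2 powr (- real (Suc r))) < 2.385" .
qed

lemma card_ratio: "real (card (V_BSSC m)) / real (card (V_BC m)) = chirp_ratio m"
proof -
  have "(2::nat) ^ (m * (m + 3) div 2) = 2 ^ m * (\<Prod>r\<in>{1..m}. 2 ^ r)"
    unfolding triangle_add prod_power_two by (simp add: power_add)
  then have "real (card (V_BSSC m)) / real (card (V_BC m))
      = (\<Prod>r\<in>{1..m}. (2::real) ^ r + 1) / (\<Prod>r\<in>{1..m}. (2::real) ^ r)"
    unfolding card_V_BSSC card_V_BC by (simp add: add.commute)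
  also have "\<dots> = (\<Prod>r\<in>{1..m}. ((2::real) ^ r + 1) / 2 ^ r)" by (rule prod_dividef[symmetric])
  also have "\<dots> = chirp_ratio m"
    unfolding chirp_ratio_def by (rule prod.cong[OF refl]) (simp add: two_powr_minus_nat add_divide_distrib)
  finally show ?thesis .
qed

theorem corollary1:
  fixes m :: nat
  assumes "1 \<le> m"
  shows "card (V_BSSC m) = 2 ^ m * (\<Prod>r\<in>{1..m}. 2 ^ r + 1)
    \<and> card (V_BC m) = 2 ^ (m * (m + 3) div 2)
    \<and> real (card (V_BSSC m)) / real (card (V_BC m)) = (\<Prod>r\<in>{1..m}. 1 + 2 powr (- real r))
    \<and> strict_mono (\<lambda>n::nat. \<Prod>r\<in>{1..n}. 1 + 2 powr (- real r))
    \<and> (\<lambda>r::nat. 1 + 2 powr (- real (Suc r))) has_prod prodinf (\<lambda>r::nat. 1 + 2 powr (- real (Suc r)))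
    \<and> (\<lambda>n::nat. \<Prod>r\<in>{1..n}. 1 + 2 powr (- real r)) \<longlonglongrightarrow> prodinf (\<lambda>r::nat. 1 + 2 powr (- real (Suc r)))
    \<and> 2.384 < prodinf (\<lambda>r::nat. 1 + 2 powr (- real (Suc r)))
    \<and> prodinf (\<lambda>r::nat. 1 + 2 powr (- real (Suc r))) < 2.385"
proof -
  (* The counts hold for every m, including m = 0. *)
  have "chirp_ratio = (\<lambda>n. \<Prod>r\<in>{1..n}. 1 + 2 powr (- real r))"
    by (simp add: chirp_ratio_def fun_eq_iff)
  then show ?thesis
    using card_V_BSSC card_V_BC card_ratio strict_mono_chirp_ratio chirp_ratio_LIMSEQ
      convergent_prod_has_prod[OF convergent_prod_chirp_factors] chirp_ratio_limit_bounds
    by (simp add: chirp_ratio_def)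
qed

end
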